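(* Let $\varphi$ be a random dynamical system with memoryless noise on $X$ (setting in the context), let $\rho$ be an ergodic probability measure of the Markov transition probabilities $(\varphi_x^t)$, and let $O:=\{(\omega,x)\in\Omega\times X : x \text{ is asymptotically stable under } \omega\}$. The following are equivalent: (i) $(\mathbb{P}\otimes\rho)(O)=1$; (ii) $(\mathbb{P}\otimes\rho)(O)>0$; (iii) $\mathbb{P}(\omega : \exists \text{ open } U\subset X \text{ with } U\cap\mathrm{supp}\,\rho\neq\emptyset \text{ such that } U \text{ contracts under } \omega)>0$.
   Context: Setting. $\mathbb{T}$ is $\mathbb{Z}$ or $\mathbb{R}$, $\mathbb{T}^+ := \mathbb{T}\cap[0,\infty)$. $(\Omega,\mathcal{F})$ is a measurable space with sub-$\sigma$-algebras $(\mathcal{F}_s^{s+t})_{s\in\mathbb{T},t\in\mathbb{T}^+}$ such that $\mathcal{F}_{t_1}^{t_2}\subset\mathcal{F}_{t_0}^{t_3}$ whenever $t_0\le t_1\le t_2\le t_3$, and these generate $\mathcal{F}$. Write $\mathcal{F}_s^\infty:=\sigma(\mathcal{F}_s^{s+t}:t\in\mathbb{T}^+)$ and $\mathcal{F}_{-\infty}^t:=\sigma(\mathcal{F}_{t-s}^t:s\in\mathbb{T}^+)$. $(\theta^t)_{t\in\mathbb{T}}$ is a group of measurable maps $\Omega\to\Omega$ with $\theta^\tau\mathcal{F}_s^t=\mathcal{F}_{s-\tau}^{t-\tau}$. $\mathbb{P}$ is a probability measure on $(\Omega,\mathcal{F})$ with $\theta^t_*\mathbb{P}=\mathbb{P}$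 for all $t$, and such that for each $t$, $\mathcal{F}_{-\infty}^t$ and $\mathcal{F}_t^\infty$ are $\mathbb{P}$-independent. $(X,d)$ is a separable metric space which is a Borel subset of its $d$-completion. $\varphi=(\varphi(t,\omega))_{t\in\mathbb{T}^+,\omega\in\Omega}$ is a family of continuous maps $X\to X$ such that (a) $\omega\mapsto\varphi(t,\omega)x$ is $(\mathcal{F}_0^t,\mathcal{B}(X))$-measurable; (b) $\varphi(0,\omega)=\mathrm{id}_X$; (c) $\varphi(s+t,\omega)=\varphi(t,\theta^s\omega)\circ\varphi(s,\omega)$; (d) if $t_n\downarrow t$ in $\mathbb{T}^+$ and $x_n\to x$ then $\varphi(t_n,\omega)x_n\to\varphi(t,\omega)x$ for all $\omega$. The Markov transition probabilities are $\varphi_x^t(A):=\mathbb{P}(\omega:\varphi(t,\omega)x\in A)$; an ergodic probability measure of $(\varphi_x^t)$ is an ergodic stationary probability measure for these transition probabilities. A set $A\subset X$ contracts under $\omega$ if $\mathrm{diam}(\varphi(t,\omega)A)\to0$ as $t\to\infty$; $x$ is asymptotically stable under $\omega$ if some neighbourhood of $x$ contracts under $\omega$. (The set $O$ is $\mathcal{F}_0^\infty\otimes\mathcal{B}(X)$-measurable.) *)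

theory Defs
  imports "HOL-Probability.Probability"
begin

text \<open>Time is modelled inside the reals: the time set TT is either the integers
  (as a subset of the reals) or all of the reals. TTp is its nonnegative part.\<close>

definition TTp :: "real set \<Rightarrow> real set" where
  "TTp TT = TT \<inter> {0..}"

definition future_alg :: "'w measure \<Rightarrow> real set \<Rightarrow> (real \<Rightarrow> real \<Rightarrow> 'w set set) \<Rightarrow> real \<Rightarrow> 'w set set" where
  "future_alg P TT F s = sigma_sets (space P) (\<Union>t\<in>TTp TT. F s (s + t))"

definition past_alg :: "'w measure \<Rightarrow> real set \<Rightarrow> (real \<Rightarrow> real \<Rightarrow> 'w set set) \<Rightarrow> real \<Rightarrow> 'w set set" where
  "past_alg P TT F t = sigma_sets (space P) (\<Union>s\<in>TTp TT. F (t - s) t)"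

definition memoryless_noise ::
  "real set \<Rightarrow> 'w measure \<Rightarrow> (real \<Rightarrow> real \<Rightarrow> 'w set set) \<Rightarrow> (real \<Rightarrow> 'w \<Rightarrow> 'w) \<Rightarrow> bool" where
  "memoryless_noise TT P F \<theta> \<longleftrightarrow>
     (TT = \<int> \<or> TT = UNIV) \<and>
     prob_space P \<and>
     (\<forall>a\<in>TT. \<forall>b\<in>TT. a \<le> b \<longrightarrow> sigma_algebra (space P) (F a b) \<and> F a b \<subseteq> sets P) \<and>
     (\<forall>t0\<in>TT. \<forall>t1\<in>TT. \<forall>t2\<in>TT. \<forall>t3\<in>TT.
        t0 \<le> t1 \<and> t1 \<le> t2 \<and> t2 \<le> t3 \<longrightarrow> F t1 t2 \<subseteq> F t0 t3) \<and>
     sets P = sigma_sets (space P) (\<Union>{F a b | a b. a \<in> TT \<and> b \<in> TT \<and> a \<le> b}) \<and>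
     (\<forall>t\<in>TT. \<theta> t \<in> measurable P P) \<and>
     (\<forall>\<omega>\<in>space P. \<theta> 0 \<omega> = \<omega>) \<and>
     (\<forall>s\<in>TT. \<forall>t\<in>TT. \<forall>\<omega>\<in>space P. \<theta> (s + t) \<omega> = \<theta> s (\<theta> t \<omega>)) \<and>
     (\<forall>\<tau>\<in>TT. \<forall>s\<in>TT. \<forall>t\<in>TT. s \<le> t \<longrightarrow>
        (\<lambda>A. \<theta> \<tau> ` A) ` F s t = F (s - \<tau>) (t - \<tau>)) \<and>
     (\<forall>t\<in>TT. distr P P (\<theta> t) = P) \<and>
     (\<forall>t\<in>TT. prob_space.indep_set P (past_alg P TT F t) (future_alg P TT F t))"

text \<open>X is a Borel subset of a Polish space (its completion sits inside the closure of X),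
  carrying the restricted metric and the Borel sigma-algebra of its subspace topology.\<close>

abbreviation borelX :: "'x::metric_space set \<Rightarrow> 'x measure" where
  "borelX X \<equiv> restrict_space borel X"

definition RDS ::
  "real set \<Rightarrow> 'w measure \<Rightarrow> (real \<Rightarrow> real \<Rightarrow> 'w set set) \<Rightarrow> (real \<Rightarrow> 'w \<Rightarrow> 'w)
    \<Rightarrow> 'x::metric_space set \<Rightarrow> (real \<Rightarrow> 'w \<Rightarrow> 'x \<Rightarrow> 'x) \<Rightarrow> bool" where
  "RDS TT P F \<theta> X \<phi> \<longleftrightarrow>
     (\<forall>t\<in>TTp TT. \<forall>\<omega>\<in>space P. continuous_on X (\<phi> t \<omega>) \<and> \<phi> t \<omega> ` X \<subseteq> X) \<and>
     (\<forall>t\<in>TTp TT. \<forall>x\<in>X. (\<lambda>\<omega>. \<phi> t \<omega> x) \<in> measurable (sigma (space P) (F 0 t)) (borelX X)) \<and>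
     (\<forall>\<omega>\<in>space P. \<forall>x\<in>X. \<phi> 0 \<omega> x = x) \<and>
     (\<forall>s\<in>TTp TT. \<forall>t\<in>TTp TT. \<forall>\<omega>\<in>space P. \<forall>x\<in>X.
        \<phi> (s + t) \<omega> x = \<phi> t (\<theta> s \<omega>) (\<phi> s \<omega> x)) \<and>
     (\<forall>tn t xn x \<omega>. (\<forall>n. tn n \<in> TTp TT) \<and> t \<in> TTp TT \<and> decseq tn \<and> tn \<longlonglongrightarrow> t \<and>
        (\<forall>n. xn n \<in> X) \<and> x \<in> X \<and> xn \<longlonglongrightarrow> x \<and> \<omega> \<in> space P \<longrightarrow>
        (\<lambda>n. \<phi> (tn n) \<omega> (xn n)) \<longlonglongrightarrow> \<phi> t \<omega> x)"

definition transition :: "'w measure \<Rightarrow> 'x::metric_space set \<Rightarrow> (real \<Rightarrow> 'w \<Rightarrow> 'x \<Rightarrow> 'x)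
    \<Rightarrow> real \<Rightarrow> 'x \<Rightarrow> 'x measure" where
  "transition P X \<phi> t x = distr P (borelX X) (\<lambda>\<omega>. \<phi> t \<omega> x)"

definition stationary :: "real set \<Rightarrow> 'w measure \<Rightarrow> 'x::metric_space set
    \<Rightarrow> (real \<Rightarrow> 'w \<Rightarrow> 'x \<Rightarrow> 'x) \<Rightarrow> 'x measure \<Rightarrow> bool" where
  "stationary TT P X \<phi> \<rho> \<longleftrightarrow>
     prob_space \<rho> \<and> sets \<rho> = sets (borelX X) \<and>
     (\<forall>t\<in>TTp TT. \<forall>A\<in>sets (borelX X).
        emeasure \<rho> A = (\<integral>\<^sup>+ x. emeasure (transition P X \<phi> t x) A \<partial>\<rho>))"

definition ergodic_stationary :: "real set \<Rightarrow> 'w measure \<Rightarrow> 'x::metric_space set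
    \<Rightarrow> (real \<Rightarrow> 'w \<Rightarrow> 'x \<Rightarrow> 'x) \<Rightarrow> 'x measure \<Rightarrow> bool" where
  "ergodic_stationary TT P X \<phi> \<rho> \<longleftrightarrow>
     stationary TT P X \<phi> \<rho> \<and>
     (\<forall>A\<in>sets (borelX X).
        (\<forall>t\<in>TTp TT. AE x in \<rho>. emeasure (transition P X \<phi> t x) A = indicator A x)
        \<longrightarrow> emeasure \<rho> A = 0 \<or> emeasure \<rho> A = 1)"

text \<open>A contracts under omega: diam(phi(t,omega) A) -> 0 as t -> infinity in TT^+
  (the diameter written out via pairwise distances, so that unbounded images are not
  spuriously assigned diameter 0).\<close>

definition contracts :: "real set \<Rightarrow> (real \<Rightarrow> 'w \<Rightarrow> 'x::metric_space \<Rightarrow> 'x) \<Rightarrow> 'w \<Rightarrow> 'x set \<Rightarrow> bool" where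
  "contracts TT \<phi> \<omega> A \<longleftrightarrow>
     (\<forall>\<epsilon>>0. \<exists>t0. \<forall>t\<in>TTp TT. t \<ge> t0 \<longrightarrow>
        (\<forall>y\<in>A. \<forall>z\<in>A. dist (\<phi> t \<omega> y) (\<phi> t \<omega> z) \<le> \<epsilon>))"

definition asymp_stable :: "real set \<Rightarrow> 'x::metric_space set \<Rightarrow> (real \<Rightarrow> 'w \<Rightarrow> 'x \<Rightarrow> 'x)
    \<Rightarrow> 'w \<Rightarrow> 'x \<Rightarrow> bool" where
  "asymp_stable TT X \<phi> \<omega> x \<longleftrightarrow>
     (\<exists>N. N \<subseteq> X \<and> (\<exists>U. openin (top_of_set X) U \<and> x \<in> U \<and> U \<subseteq> N) \<and> contracts TT \<phi> \<omega> N)"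

definition supp :: "'x::metric_space set \<Rightarrow> 'x measure \<Rightarrow> 'x set" where
  "supp X \<rho> = {x \<in> X. \<forall>U. openin (top_of_set X) U \<and> x \<in> U \<longrightarrow> emeasure \<rho> U > 0}"

end

theory Submission
  imports Defs
begin

text \<open>Let \<open>f x\<close> be the probability that \<open>x\<close> is asymptotically stable. Stability of \<open>x\<close> is an
  event of the future \<sigma>-algebra \<open>F\<^sub>0\<^sup>\<infinity>\<close>, and by the cocycle property \<open>x\<close> is stable under \<open>\<omega>\<close>
  whenever \<open>\<phi>(t,\<omega>) x\<close> is stable under \<open>\<theta>\<^sup>t \<omega>\<close>. As the past \<open>F\<^sub>0\<^sup>t\<close> and the shifted future are
  independent and \<open>\<theta>\<^sup>t\<close> preserves \<open>P\<close>, this gives \<open>P(O\<^sub>x \<inter> G) \<ge> E[1\<^sub>G f(\<phi>(t) x)]\<close> for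
  \<open>G \<in> F\<^sub>0\<^sup>t\<close>. In particular \<open>f\<close> is superharmonic, so by stationarity its level sets
  \<open>{f \<ge> c}\<close> are invariant and by ergodicity have \<open>\<rho>\<close>-measure 0 or 1. If \<open>(P \<otimes> \<rho>)(O) > 0\<close>,
  then \<open>f \<ge> c > 0\<close> \<open>\<rho>\<close>-almost everywhere, hence \<open>P(O\<^sub>x \<inter> G) \<ge> c P(G)\<close> for all \<open>G\<close> in the
  algebra \<open>\<Union>\<^sub>n F\<^sub>0\<^sup>n\<close>, which generates \<open>F\<^sub>0\<^sup>\<infinity>\<close>; approximating the complement of \<open>O\<^sub>x\<close> by
  such \<open>G\<close> forces \<open>P(O\<^sub>x) = 1\<close>. The equivalence with (iii) is Fubini: a realisation \<open>\<omega>\<close>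
  contracts an open set meeting the support of \<open>\<rho>\<close> exactly when its set of stable points
  has positive \<open>\<rho>\<close>-measure, since \<open>\<rho>\<close> is carried by its support.\<close>

definition dyadic_ceil :: "real \<Rightarrow> nat \<Rightarrow> real" where
  "dyadic_ceil t n = real_of_int \<lceil>t * 2^n\<rceil> / 2^n"

lemma dyadic_ceil_ge: "t \<le> dyadic_ceil t n"
proof -
  have "t * 2^n \<le> real_of_int \<lceil>t * 2^n\<rceil>" by (rule le_of_int_ceiling)
  then show ?thesis unfolding dyadic_ceil_def by (simp add: field_simps)
qed

lemma dyadic_ceil_less: "dyadic_ceil t n < t + (1/2)^n"
proof -
  have "real_of_int \<lceil>t * 2^n\<rceil> < t * 2^n + 1" using ceiling_correct[of "t*2^n"] by linarith
  then show ?thesis unfolding dyadic_ceil_def by (simp add: field_simps power_one_over)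
qed

lemma dyadic_ceil_Rats: "dyadic_ceil t n \<in> \<rat>"
  unfolding dyadic_ceil_def by (intro Rats_divide Rats_of_int Rats_power) simp_all

lemma dyadic_ceil_Ints: "t \<in> \<int> \<Longrightarrow> dyadic_ceil t n = t"
proof (elim Ints_cases)
  fix k assume t: "t = real_of_int k"
  then have "\<lceil>t * 2^n\<rceil> = k * 2^n" by (metis ceiling_of_int of_int_mult of_int_numeral of_int_power)
  then show ?thesis unfolding dyadic_ceil_def by (simp add: t)
qed

lemma decseq_dyadic_ceil: "decseq (dyadic_ceil t)"
proof (rule decseq_SucI)
  fix n
  have "t * 2^Suc n \<le> 2 * real_of_int \<lceil>t * 2^n\<rceil>" by (simp add: le_of_int_ceiling)
  then have "real_of_int \<lceil>t * 2^Suc n\<rceil> \<le> 2 * real_of_int \<lceil>t * 2^n\<rceil>"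
    by (metis ceiling_le_iff of_int_le_iff of_int_mult of_int_numeral)
  then show "dyadic_ceil t (Suc n) \<le> dyadic_ceil t n" unfolding dyadic_ceil_def by (simp add: field_simps)
qed

lemma dyadic_ceil_tendsto: "dyadic_ceil t \<longlonglongrightarrow> t"
proof (rule real_tendsto_sandwich[where f="\<lambda>n. t" and h="\<lambda>n. t + (1/2)^n"])
  show "\<forall>\<^sub>F n in sequentially. t \<le> dyadic_ceil t n" by (simp add: dyadic_ceil_ge)
  show "\<forall>\<^sub>F n in sequentially. dyadic_ceil t n \<le> t + (1/2)^n"
    by (intro always_eventually allI less_imp_le dyadic_ceil_less)
  have "(\<lambda>n. t + (1/2::real)^n) \<longlonglongrightarrow> t + 0"
    by (intro tendsto_add tendsto_const LIMSEQ_power_zero) simp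
  then show "(\<lambda>n. t + (1/2::real)^n) \<longlonglongrightarrow> t" by simp
qed simp

lemma countable_dense_subset:
  fixes X :: "'a::{second_countable_topology, metric_space} set"
  obtains D where "countable D" "D \<subseteq> X" "X \<subseteq> closure D"
proof -
  obtain B :: "'a set set" where B: "countable B" "\<And>C. C \<in> B \<Longrightarrow> open C"
    "\<And>S. open S \<Longrightarrow> \<exists>U. U \<subseteq> B \<and> S = \<Union>U"
    by (metis univ_second_countable)
  define D where "D = (\<lambda>b. SOME x. x \<in> b \<inter> X) ` {b\<in>B. b \<inter> X \<noteq> {}}"
  have "countable D" unfolding D_def using B(1) by auto
  moreover have "D \<subseteq> X" unfolding D_def by (auto intro: someI2_ex)
  moreover have "X \<subseteq> closure D"
  proof
    fix x assume x: "x \<in> X"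
    show "x \<in> closure D"
      unfolding closure_iff_nhds_not_empty
    proof (intro allI impI notI)
      fix A S assume "S \<subseteq> A" "open S" "x \<in> S" "D \<inter> A = {}"
      obtain U where U: "U \<subseteq> B" "S = \<Union>U" using B(3)[OF \<open>open S\<close>] by blast
      then obtain b where b: "b \<in> U" "x \<in> b" using \<open>x \<in> S\<close> by blast
      then have "b \<in> {b\<in>B. b \<inter> X \<noteq> {}}" using U x by auto
      then have "(SOME x. x \<in> b \<inter> X) \<in> D" unfolding D_def by blast
      moreover have "(SOME x. x \<in> b \<inter> X) \<in> b" using b x by (metis (mono_tags) IntD1 IntI someI)
      ultimately show False using \<open>D \<inter> A = {}\<close> \<open>S \<subseteq> A\<close> U b by blast
    qed
  qed
  ultimately show ?thesis by (rule that)
qed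

lemma openin_subset_closure_Int_dense:
  fixes X :: "'a::metric_space set"
  assumes U: "openin (top_of_set X) U" and D: "D \<subseteq> X" "X \<subseteq> closure D"
  shows "U \<subseteq> closure (U \<inter> D)"
proof
  fix y assume y: "y \<in> U"
  obtain e where e: "e > 0" "\<And>z. z \<in> X \<Longrightarrow> dist z y < e \<Longrightarrow> z \<in> U"
    using U y unfolding openin_euclidean_subtopology_iff by blast
  have "y \<in> closure D" using U y D(2) openin_imp_subset by blast
  show "y \<in> closure (U \<inter> D)"
    unfolding closure_approachable
  proof (intro allI impI)
    fix \<epsilon> :: real assume "\<epsilon> > 0"
    with e(1) \<open>y \<in> closure D\<close> obtain d where "d \<in> D" "dist d y < min e \<epsilon>"
      unfolding closure_approachable by (metis min_less_iff_conj)
    with e D(1) show "\<exists>x\<in>U \<inter> D. dist x y < \<epsilon>" by auto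
  qed
qed

lemma tendsto_least_close_index:
  fixes d :: "nat \<Rightarrow> 'a::metric_space"
  assumes x: "x \<in> closure (range d)"
  shows "(\<lambda>k. d (LEAST n. dist x (d n) < 1 / (real k + 1))) \<longlonglongrightarrow> x"
proof (rule metric_LIMSEQ_I)
  have close: "dist x (d (LEAST n. dist x (d n) < 1 / (real k + 1))) < 1 / (real k + 1)" for k
  proof -
    have "1 / (real k + 1) > 0" by simp
    with x obtain y where "y \<in> range d" "dist y x < 1 / (real k + 1)"
      unfolding closure_approachable by blast
    then obtain n where "dist x (d n) < 1 / (real k + 1)" by (auto simp: dist_commute)
    then show ?thesis by (rule LeastI)
  qed
  fix e :: real assume "e > 0"
  then obtain N where N: "inverse (real (Suc N)) < e" using reals_Archimedean by blast
  have "dist (d (LEAST n. dist x (d n) < 1 / (real k + 1))) x < e" if "N \<le> k" for k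
  proof -
    have "1 / (real k + 1) \<le> inverse (real (Suc N))"
      using that by (simp add: inverse_eq_divide divide_simps)
    then show ?thesis using close[of k] N by (simp add: dist_commute)
  qed
  then show "\<exists>N. \<forall>k\<ge>N. dist (d (LEAST n. dist x (d n) < 1 / (real k + 1))) x < e" by blast
qed

lemma ennreal_eq_0_if_less_inverse:
  fixes x :: ennreal
  assumes less: "\<And>n. x < ennreal (1 / (real n + 1))"
  shows "x = 0"
proof -
  have "x \<le> 0 + ennreal e" if "e > 0" for e :: real
  proof -
    obtain n where "inverse (real (Suc n)) < e" using reals_Archimedean \<open>e > 0\<close> by blast
    then have "ennreal (1 / (real n + 1)) \<le> ennreal e"
      by (simp add: inverse_eq_divide add.commute ennreal_leI)
    with less[of n] show ?thesis by simp
  qed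
  then have "x \<le> 0" by (rule ennreal_le_epsilon)
  then show ?thesis by simp
qed

lemma contracts_subset: "contracts TT \<phi> \<omega> A \<Longrightarrow> B \<subseteq> A \<Longrightarrow> contracts TT \<phi> \<omega> B"
  unfolding contracts_def by (meson subsetD)

lemma AE_eq_of_le_nn_integral_eq:
  fixes u g :: "'a \<Rightarrow> ennreal"
  assumes u: "u \<in> borel_measurable M" and g: "g \<in> borel_measurable M"
    and le: "AE x in M. g x \<le> u x"
    and eq: "(\<integral>\<^sup>+ x. u x \<partial>M) = (\<integral>\<^sup>+ x. g x \<partial>M)"
    and fin: "(\<integral>\<^sup>+ x. u x \<partial>M) \<noteq> \<infinity>"
  shows "AE x in M. u x = g x"
proof -
  have fing: "(\<integral>\<^sup>+ x. g x \<partial>M) \<noteq> \<infinity>" using fin eq by simp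
  have "(\<integral>\<^sup>+ x. u x - g x \<partial>M) = (\<integral>\<^sup>+ x. u x \<partial>M) - (\<integral>\<^sup>+ x. g x \<partial>M)"
    by (rule nn_integral_diff[OF u g fing le])
  also have "\<dots> = 0" using eq fin by (simp add: diff_eq_0_iff_ennreal top.not_eq_extremum)
  finally have "AE x in M. u x - g x = 0"
    using nn_integral_0_iff_AE[of "\<lambda>x. u x - g x" M] u g by simp
  with le show ?thesis
    by eventually_elim (metis antisym ennreal_minus_eq_0)
qed

lemma (in prob_space) indep_set_mono:
  "indep_set A B \<Longrightarrow> A' \<subseteq> A \<Longrightarrow> B' \<subseteq> B \<Longrightarrow> indep_set A' B'"
  unfolding indep_set_def by (rule indep_sets_mono_sets) (auto split: bool.split)

lemma (in finite_measure) measure_Union_minus_initial_less: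
  fixes A :: "nat \<Rightarrow> 'a set"
  assumes A: "\<And>i. A i \<in> sets M" and e: "e > 0"
  obtains N where "measure M ((\<Union>i. A i) - (\<Union>i<N. A i)) < e"
proof -
  define U where "U N = (\<Union>i<N. A i)" for N
  have U: "U N \<in> sets M" for N unfolding U_def using A by (intro sets.finite_UN) auto
  have "incseq U" by (rule incseq_SucI) (auto simp: U_def lessThan_Suc)
  moreover have "(\<Union>N. U N) = (\<Union>i. A i)" unfolding U_def by auto
  ultimately have "(\<lambda>N. measure M (U N)) \<longlonglongrightarrow> measure M (\<Union>i. A i)"
    using finite_Lim_measure_incseq[of U] U by auto
  from LIMSEQ_D[OF this e] obtain N where "\<forall>n\<ge>N. norm (measure M (U n) - measure M (\<Union>i. A i)) < e"
    by blast
  then have "norm (measure M (U N) - measure M (\<Union>i. A i)) < e" by blast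
  then have "measure M (\<Union>i. A i) - measure M (U N) < e" unfolding real_norm_def by linarith
  moreover have "U N \<subseteq> (\<Union>i. A i)" unfolding U_def by blast
  then have "measure M ((\<Union>i. A i) - U N) = measure M (\<Union>i. A i) - measure M (U N)"
    using A U by (subst finite_measure_Diff') (auto simp: Int_absorb1)
  ultimately show ?thesis using that[of N] unfolding U_def by linarith
qed

lemma (in finite_measure) Union_approx_by_algebra:
  fixes A :: "nat \<Rightarrow> 'a set"
  assumes alg: "algebra (space M) Alg" and sub: "Alg \<subseteq> sets M" and A: "\<And>i. A i \<in> sets M"
    and approx: "\<And>i \<delta>. \<delta> > 0 \<Longrightarrow> \<exists>B\<in>Alg. measure M (A i - B) + measure M (B - A i) < \<delta>"
    and e: "e > 0"
  shows "\<exists>B\<in>Alg. measure M ((\<Union>i. A i) - B) + measure M (B - (\<Union>i. A i)) < e"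
proof -
  interpret algebra "space M" Alg by (rule alg)
  obtain N where N: "measure M ((\<Union>i. A i) - (\<Union>i<N. A i)) < e / 2"
    using measure_Union_minus_initial_less[of A "e / 2", OF A] e by auto
  define \<delta> where "\<delta> = e / (2 * (real N + 1))"
  have "\<delta> > 0" using e by (simp add: \<delta>_def)
  then obtain Bf where Bf: "\<And>i. Bf i \<in> Alg" "\<And>i. measure M (A i - Bf i) + measure M (Bf i - A i) < \<delta>"
    using approx by metis
  define B where "B = (\<Union>i<N. Bf i)"
  have Bfs: "\<And>i. Bf i \<in> sets M" using Bf(1) sub by blast
  have "measure M ((\<Union>i. A i) - B) \<le> measure M (((\<Union>i. A i) - (\<Union>i<N. A i)) \<union> (\<Union>i<N. A i - Bf i))"
    by (rule finite_measure_mono) (use A Bfs in \<open>auto simp: B_def\<close>)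
  also have "\<dots> \<le> measure M ((\<Union>i. A i) - (\<Union>i<N. A i)) + (\<Sum>i<N. measure M (A i - Bf i))"
    using A Bfs
    by (intro order_trans[OF measure_Un_le] add_left_mono finite_measure_subadditive_finite) auto
  finally have d1: "measure M ((\<Union>i. A i) - B) \<le> measure M ((\<Union>i. A i) - (\<Union>i<N. A i)) + (\<Sum>i<N. measure M (A i - Bf i))" .
  have "measure M (B - (\<Union>i. A i)) \<le> measure M (\<Union>i<N. Bf i - A i)"
    by (rule finite_measure_mono) (use A Bfs in \<open>auto simp: B_def\<close>)
  also have "\<dots> \<le> (\<Sum>i<N. measure M (Bf i - A i))"
    by (rule finite_measure_subadditive_finite) (use A Bfs in blast)+
  finally have d2: "measure M (B - (\<Union>i. A i)) \<le> (\<Sum>i<N. measure M (Bf i - A i))" .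
  have "(\<Sum>i<N. measure M (A i - Bf i)) + (\<Sum>i<N. measure M (Bf i - A i)) \<le> (\<Sum>i<N. \<delta>)"
    unfolding sum.distrib[symmetric] by (rule sum_mono) (use Bf(2) less_imp_le in blast)
  also have "\<dots> \<le> e / 2" using e by (simp add: \<delta>_def field_simps)
  finally have "measure M ((\<Union>i. A i) - B) + measure M (B - (\<Union>i. A i)) < e"
    using d1 d2 N by linarith
  moreover have "B \<in> Alg" unfolding B_def using Bf(1) by blast
  ultimately show ?thesis by blast
qed

lemma (in finite_measure) sigma_sets_approx_by_algebra:
  assumes alg: "algebra (space M) Alg" and sub: "Alg \<subseteq> sets M" and G: "G \<in> sigma_sets (space M) Alg"
    and e: "e > 0"
  shows "\<exists>B\<in>Alg. measure M (G - B) + measure M (B - G) < e"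
proof -
  interpret A: algebra "space M" Alg by (rule alg)
  have sig: "sigma_sets (space M) Alg \<subseteq> sets M" by (rule sets.sigma_sets_subset[OF sub])
  have "Int_stable Alg" unfolding Int_stable_def by blast
  from this A.space_closed G have "\<forall>e>0. \<exists>B\<in>Alg. measure M (G - B) + measure M (B - G) < e"
  proof (induction rule: sigma_sets_induct_disjoint)
    case (basic A)
    then show ?case by (intro allI impI bexI[of _ A]) auto
  next
    case empty
    then show ?case by (intro allI impI bexI[of _ "{}"]) auto
  next
    case (compl A)
    have "A \<subseteq> space M" using compl.hyps sig sets.sets_into_space by blast
    then have "(space M - A) - (space M - B) = B - A" "(space M - B) - (space M - A) = A - B"
      if "B \<in> Alg" for B using that A.space_closed by blast+
    then show ?case using compl.IH by (metis A.compl_sets add.commute)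
  next
    case (union A)
    then show ?case using sig by (intro allI impI Union_approx_by_algebra[OF alg sub]) blast+
  qed
  with e show ?thesis by blast
qed

lemma (in prob_space) prob_eq_1_of_algebra_lower_bound:
  assumes alg: "algebra (space M) Alg" and sub: "Alg \<subseteq> sets M" and S: "S \<in> sigma_sets (space M) Alg"
    and c: "c > 0" and lower: "\<And>B. B \<in> Alg \<Longrightarrow> c * prob B \<le> prob (S \<inter> B)"
  shows "prob S = 1"
proof -
  define G where "G = space M - S"
  have SM: "S \<in> sets M" using S sets.sigma_sets_subset[OF sub] by blast
  then have GM: "G \<in> sets M" unfolding G_def by blast
  have G: "G \<in> sigma_sets (space M) Alg" unfolding G_def using S by (rule sigma_sets.Compl)
  have "c * prob G \<le> 0 + e" if e: "e > 0" for e
  proof -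
    define e' where "e' = e / (c + 1)"
    have "e' > 0" using e c by (simp add: e'_def)
    then obtain B where B: "B \<in> Alg" "prob (G - B) + prob (B - G) < e'"
      using sigma_sets_approx_by_algebra[OF alg sub G] by blast
    have BM: "B \<in> sets M" using B(1) sub by blast
    have "S \<inter> B \<subseteq> B - G" unfolding G_def using SM sets.sets_into_space by blast
    then have "prob (S \<inter> B) \<le> prob (B - G)" by (rule finite_measure_mono) (use BM GM in blast)
    then have cB: "c * prob B \<le> prob (B - G)" using lower[OF B(1)] by linarith
    have "prob G \<le> prob ((G - B) \<union> B)" by (rule finite_measure_mono) (use BM GM in blast)+
    also have "\<dots> \<le> prob (G - B) + prob B" by (rule measure_Un_le) (use BM GM in blast)+
    finally have "c * prob G \<le> c * prob (G - B) + c * prob B"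
      using c by (metis distrib_left mult_left_mono less_imp_le)
    moreover have "prob (G - B) \<le> e'" "prob (B - G) \<le> e'"
      using B(2) measure_nonneg[of M "G - B"] measure_nonneg[of M "B - G"] by linarith+
    moreover from this(1) have "c * prob (G - B) \<le> c * e'" using c by (intro mult_left_mono) auto
    ultimately have "c * prob G \<le> (c + 1) * e'" using cB by (simp add: distrib_right)
    also have "\<dots> = e" using c by (simp add: e'_def)
    finally show ?thesis by simp
  qed
  then have "c * prob G \<le> 0" by (rule field_le_epsilon)
  then have "prob G = 0" using c measure_nonneg[of M G] by (simp add: mult_le_0_iff)
  then show ?thesis using prob_compl[OF SM] unfolding G_def by simp
qed

section \<open>Random dynamical systems with memoryless noise\<close>

locale memoryless_rds =
  fixes TT :: "real set" and P :: "'w measure" and F :: "real \<Rightarrow> real \<Rightarrow> 'w set set"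
    and \<theta> :: "real \<Rightarrow> 'w \<Rightarrow> 'w" and X :: "'x::{metric_space, second_countable_topology} set"
    and \<phi> :: "real \<Rightarrow> 'w \<Rightarrow> 'x \<Rightarrow> 'x"
  assumes noise: "memoryless_noise TT P F \<theta>"
    and rds: "RDS TT P F \<theta> X \<phi>"
begin

lemma TT_cases: "TT = \<int> \<or> TT = UNIV"
  using noise by (simp add: memoryless_noise_def)

lemma prob_space_P: "prob_space P"
  using noise by (simp add: memoryless_noise_def)

lemma TT_0: "0 \<in> TT" using TT_cases by auto
lemma TT_of_nat: "real n \<in> TT" using TT_cases by (auto simp: Ints_of_nat)
lemma TT_diff: "a \<in> TT \<Longrightarrow> b \<in> TT \<Longrightarrow> a - b \<in> TT" using TT_cases by (auto intro: Ints_diff)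
lemma TT_uminus: "t \<in> TT \<Longrightarrow> - t \<in> TT" using TT_diff[OF TT_0] by (metis diff_0)
lemma TTp_iff: "t \<in> TTp TT \<longleftrightarrow> t \<in> TT \<and> 0 \<le> t" by (simp add: TTp_def)
lemma TTp_of_nat: "real n \<in> TTp TT" by (simp add: TTp_iff TT_of_nat)

lemma sigma_algebra_F: "a \<in> TT \<Longrightarrow> b \<in> TT \<Longrightarrow> a \<le> b \<Longrightarrow> sigma_algebra (space P) (F a b)"
  using noise by (simp add: memoryless_noise_def)

lemma F_subset_sets: "a \<in> TT \<Longrightarrow> b \<in> TT \<Longrightarrow> a \<le> b \<Longrightarrow> F a b \<subseteq> sets P"
proof -
  have "\<forall>a\<in>TT. \<forall>b\<in>TT. a \<le> b \<longrightarrow> sigma_algebra (space P) (F a b) \<and> F a b \<subseteq> sets P"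
    using noise unfolding memoryless_noise_def by (elim conjE) assumption
  then show "a \<in> TT \<Longrightarrow> b \<in> TT \<Longrightarrow> a \<le> b \<Longrightarrow> F a b \<subseteq> sets P" by simp
qed

lemma F_mono:
  "t0 \<in> TT \<Longrightarrow> t1 \<in> TT \<Longrightarrow> t2 \<in> TT \<Longrightarrow> t3 \<in> TT \<Longrightarrow> t0 \<le> t1 \<Longrightarrow> t1 \<le> t2 \<Longrightarrow> t2 \<le> t3
   \<Longrightarrow> F t1 t2 \<subseteq> F t0 t3"
proof -
  have "\<forall>t0\<in>TT. \<forall>t1\<in>TT. \<forall>t2\<in>TT. \<forall>t3\<in>TT.
        t0 \<le> t1 \<and> t1 \<le> t2 \<and> t2 \<le> t3 \<longrightarrow> F t1 t2 \<subseteq> F t0 t3"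
    using noise unfolding memoryless_noise_def by (elim conjE) assumption
  then show "t0 \<in> TT \<Longrightarrow> t1 \<in> TT \<Longrightarrow> t2 \<in> TT \<Longrightarrow> t3 \<in> TT \<Longrightarrow> t0 \<le> t1 \<Longrightarrow> t1 \<le> t2 \<Longrightarrow> t2 \<le> t3
   \<Longrightarrow> F t1 t2 \<subseteq> F t0 t3" by simp
qed

lemma measurable_theta: "t \<in> TT \<Longrightarrow> \<theta> t \<in> measurable P P"
  using noise by (simp add: memoryless_noise_def)

lemma theta_0: "\<omega> \<in> space P \<Longrightarrow> \<theta> 0 \<omega> = \<omega>"
  using noise by (simp add: memoryless_noise_def)

lemma theta_add: "s \<in> TT \<Longrightarrow> t \<in> TT \<Longrightarrow> \<omega> \<in> space P \<Longrightarrow> \<theta> (s + t) \<omega> = \<theta> s (\<theta> t \<omega>)"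
  using noise by (simp add: memoryless_noise_def)

lemma theta_image_F:
  "\<tau> \<in> TT \<Longrightarrow> s \<in> TT \<Longrightarrow> t \<in> TT \<Longrightarrow> s \<le> t \<Longrightarrow> (\<lambda>A. \<theta> \<tau> ` A) ` F s t = F (s - \<tau>) (t - \<tau>)"
proof -
  have "\<forall>\<tau>\<in>TT. \<forall>s\<in>TT. \<forall>t\<in>TT. s \<le> t \<longrightarrow> (\<lambda>A. \<theta> \<tau> ` A) ` F s t = F (s - \<tau>) (t - \<tau>)"
    using noise unfolding memoryless_noise_def by (elim conjE) assumption
  then show "\<tau> \<in> TT \<Longrightarrow> s \<in> TT \<Longrightarrow> t \<in> TT \<Longrightarrow> s \<le> t \<Longrightarrow> (\<lambda>A. \<theta> \<tau> ` A) ` F s t = F (s - \<tau>) (t - \<tau>)"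
    by simp
qed

lemma distr_theta: "t \<in> TT \<Longrightarrow> distr P P (\<theta> t) = P"
  using noise by (simp add: memoryless_noise_def)

lemma indep_past_future: "t \<in> TT \<Longrightarrow> prob_space.indep_set P (past_alg P TT F t) (future_alg P TT F t)"
  using noise by (simp add: memoryless_noise_def)

lemma continuous_on_phi: "t \<in> TTp TT \<Longrightarrow> \<omega> \<in> space P \<Longrightarrow> continuous_on X (\<phi> t \<omega>)"
  using rds by (simp add: RDS_def)

lemma phi_in_X: "t \<in> TTp TT \<Longrightarrow> \<omega> \<in> space P \<Longrightarrow> x \<in> X \<Longrightarrow> \<phi> t \<omega> x \<in> X"
  using rds by (auto simp: RDS_def)

lemma measurable_phi_F:
  "t \<in> TTp TT \<Longrightarrow> x \<in> X \<Longrightarrow> (\<lambda>\<omega>. \<phi> t \<omega> x) \<in> measurable (sigma (space P) (F 0 t)) (borelX X)"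
  using rds by (simp add: RDS_def)

lemma phi_cocycle: "s \<in> TTp TT \<Longrightarrow> t \<in> TTp TT \<Longrightarrow> \<omega> \<in> space P \<Longrightarrow> x \<in> X \<Longrightarrow>
   \<phi> (s + t) \<omega> x = \<phi> t (\<theta> s \<omega>) (\<phi> s \<omega> x)"
  using rds by (simp add: RDS_def)

lemma phi_right_continuous:
  assumes "\<And>n. tn n \<in> TTp TT" "t \<in> TTp TT" "decseq tn" "tn \<longlonglongrightarrow> t" "x \<in> X" "\<omega> \<in> space P"
  shows "(\<lambda>n. \<phi> (tn n) \<omega> x) \<longlonglongrightarrow> \<phi> t \<omega> x"
proof -
  have "\<forall>tn t xn x \<omega>. (\<forall>n. tn n \<in> TTp TT) \<and> t \<in> TTp TT \<and> decseq tn \<and> tn \<longlonglongrightarrow> t \<and>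
        (\<forall>n. xn n \<in> X) \<and> x \<in> X \<and> xn \<longlonglongrightarrow> x \<and> \<omega> \<in> space P \<longrightarrow>
        (\<lambda>n. \<phi> (tn n) \<omega> (xn n)) \<longlonglongrightarrow> \<phi> t \<omega> x"
    using rds unfolding RDS_def by (elim conjE) assumption
  then show ?thesis using assms by auto
qed

lemma theta_in_space: "t \<in> TT \<Longrightarrow> \<omega> \<in> space P \<Longrightarrow> \<theta> t \<omega> \<in> space P"
  using measurable_space[OF measurable_theta] by blast

lemma F0_subset_sets: "t \<in> TTp TT \<Longrightarrow> F 0 t \<subseteq> sets P"
  using F_subset_sets[of 0 t] TT_0 by (auto simp: TTp_iff)

lemma sets_sigma_F0: "t \<in> TTp TT \<Longrightarrow> sets (sigma (space P) (F 0 t)) = F 0 t"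
proof -
  assume t: "t \<in> TTp TT"
  have "F 0 t \<subseteq> Pow (space P)" using F0_subset_sets[OF t] sets.space_closed by blast
  then have "sets (sigma (space P) (F 0 t)) = sigma_sets (space P) (F 0 t)" by (rule sets_measure_of)
  also have "\<dots> = F 0 t"
    using sigma_algebra_F[of 0 t] t TT_0 by (simp add: TTp_iff sigma_algebra.sigma_sets_eq)
  finally show ?thesis .
qed

lemma measurable_phi:
  "t \<in> TTp TT \<Longrightarrow> x \<in> X \<Longrightarrow> (\<lambda>\<omega>. \<phi> t \<omega> x) \<in> measurable P (borelX X)"
  by (rule measurable_mono[THEN subsetD, OF _ _ _ _ measurable_phi_F])
    (auto simp: sets_sigma_F0 F0_subset_sets space_measure_of_conv)

lemma measurable_phi_borel:
  "t \<in> TTp TT \<Longrightarrow> x \<in> X \<Longrightarrow> (\<lambda>\<omega>. \<phi> t \<omega> x) \<in> borel_measurable P"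
  using measurable_phi by (simp add: measurable_restrict_space2_iff)

definition rat_times :: "real set" where
  "rat_times = TTp TT \<inter> \<rat>"

lemma countable_rat_times: "countable rat_times"
  unfolding rat_times_def by (rule countable_subset[OF _ countable_rat]) auto

lemma rat_times_TTp: "t \<in> rat_times \<Longrightarrow> t \<in> TTp TT"
  by (simp add: rat_times_def)

lemma dyadic_ceil_rat_times:
  assumes t: "t \<in> TTp TT"
  shows "dyadic_ceil t n \<in> rat_times"
proof -
  have "dyadic_ceil t n \<in> TT"
    using TT_cases t dyadic_ceil_Ints[of t n] by (auto simp: TTp_iff)
  moreover have "0 \<le> dyadic_ceil t n" using t dyadic_ceil_ge[of t n] by (simp add: TTp_iff)
  ultimately show ?thesis using dyadic_ceil_Rats[of t n] by (simp add: rat_times_def TTp_iff)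
qed

text \<open>Right-continuity in time (along dyadic approximations from above) and continuity
  in space carry a distance bound from rational times and a dense set of points to all
  times and points.\<close>

lemma dist_phi_le_of_rat_times:
  assumes \<omega>: "\<omega> \<in> space P" and UX: "U \<subseteq> X" and Ucl: "U \<subseteq> closure (U \<inter> D)"
    and bound: "\<And>s y z. s \<in> rat_times \<Longrightarrow> a \<le> s \<Longrightarrow> y \<in> U \<inter> D \<Longrightarrow> z \<in> U \<inter> D \<Longrightarrow>
                  dist (\<phi> s \<omega> y) (\<phi> s \<omega> z) \<le> \<delta>"
    and t: "t \<in> TTp TT" "a \<le> t" and y: "y \<in> U" and z: "z \<in> U"
  shows "dist (\<phi> t \<omega> y) (\<phi> t \<omega> z) \<le> \<delta>"
proof -
  have dense_bound: "dist (\<phi> t \<omega> y') (\<phi> t \<omega> z') \<le> \<delta>" if "y' \<in> U \<inter> D" "z' \<in> U \<inter> D" for y' z'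
  proof (rule LIMSEQ_le_const2)
    have "(\<lambda>n. \<phi> (dyadic_ceil t n) \<omega> w) \<longlonglongrightarrow> \<phi> t \<omega> w" if "w \<in> X" for w
      using dyadic_ceil_rat_times[OF t(1)] rat_times_TTp decseq_dyadic_ceil dyadic_ceil_tendsto
      by (intro phi_right_continuous t(1) \<omega> that) auto
    then show "(\<lambda>n. dist (\<phi> (dyadic_ceil t n) \<omega> y') (\<phi> (dyadic_ceil t n) \<omega> z'))
        \<longlonglongrightarrow> dist (\<phi> t \<omega> y') (\<phi> t \<omega> z')"
      using that UX by (intro tendsto_dist) auto
    show "\<exists>N. \<forall>n\<ge>N. dist (\<phi> (dyadic_ceil t n) \<omega> y') (\<phi> (dyadic_ceil t n) \<omega> z') \<le> \<delta>"
    proof (intro exI allI impI)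
      fix n
      have "a \<le> dyadic_ceil t n" using t(2) dyadic_ceil_ge[of t n] by linarith
      then show "dist (\<phi> (dyadic_ceil t n) \<omega> y') (\<phi> (dyadic_ceil t n) \<omega> z') \<le> \<delta>"
        using bound dyadic_ceil_rat_times[OF t(1)] that by blast
    qed
  qed
  obtain ys where ys: "\<forall>n. ys n \<in> U \<inter> D" "ys \<longlonglongrightarrow> y"
    using y Ucl closure_sequential by blast
  obtain zs where zs: "\<forall>n. zs n \<in> U \<inter> D" "zs \<longlonglongrightarrow> z"
    using z Ucl closure_sequential by blast
  have "(\<lambda>n. \<phi> t \<omega> (ys n)) \<longlonglongrightarrow> \<phi> t \<omega> y"
    using continuous_on_phi[OF t(1) \<omega>] ys y UX unfolding continuous_on_sequentially by (auto simp: comp_def)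
  moreover have "(\<lambda>n. \<phi> t \<omega> (zs n)) \<longlonglongrightarrow> \<phi> t \<omega> z"
    using continuous_on_phi[OF t(1) \<omega>] zs z UX unfolding continuous_on_sequentially by (auto simp: comp_def)
  ultimately have "(\<lambda>n. dist (\<phi> t \<omega> (ys n)) (\<phi> t \<omega> (zs n))) \<longlonglongrightarrow> dist (\<phi> t \<omega> y) (\<phi> t \<omega> z)"
    by (intro tendsto_dist)
  then show ?thesis
    by (rule LIMSEQ_le_const2) (use dense_bound ys zs in auto)
qed

lemma contracts_iff_rat_times:
  assumes \<omega>: "\<omega> \<in> space P" and UX: "U \<subseteq> X" and Ucl: "U \<subseteq> closure (U \<inter> D)"
  shows "contracts TT \<phi> \<omega> U \<longleftrightarrow>
    (\<forall>m::nat. \<exists>j::nat. \<forall>t\<in>rat_times. real j \<le> t \<longrightarrow>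
       (\<forall>y\<in>U \<inter> D. \<forall>z\<in>U \<inter> D. dist (\<phi> t \<omega> y) (\<phi> t \<omega> z) \<le> 1 / (real m + 1)))"
    (is "_ \<longleftrightarrow> (\<forall>m. \<exists>j. ?bound m j)")
proof
  assume c: "contracts TT \<phi> \<omega> U"
  show "\<forall>m. \<exists>j. ?bound m j"
  proof
    fix m :: nat
    have "(1::real) / (real m + 1) > 0" by simp
    then obtain t0 where "\<forall>t\<in>TTp TT. t \<ge> t0 \<longrightarrow> (\<forall>y\<in>U. \<forall>z\<in>U. dist (\<phi> t \<omega> y) (\<phi> t \<omega> z) \<le> 1 / (real m + 1))"
      using c unfolding contracts_def by blast
    moreover have "t0 \<le> real (nat \<lceil>t0\<rceil>)" by linarith
    ultimately show "\<exists>j. ?bound m j"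
      using rat_times_TTp by (intro exI[of _ "nat \<lceil>t0\<rceil>"]) auto
  qed
next
  assume H: "\<forall>m. \<exists>j. ?bound m j"
  show "contracts TT \<phi> \<omega> U"
    unfolding contracts_def
  proof (intro allI impI)
    fix \<epsilon> :: real assume "\<epsilon> > 0"
    then obtain m :: nat where "inverse (real (Suc m)) < \<epsilon>" using reals_Archimedean by blast
    then have m: "1 / (real m + 1) < \<epsilon>" by (simp add: inverse_eq_divide add.commute)
    obtain j where j: "?bound m j" using H by blast
    have "dist (\<phi> t \<omega> y) (\<phi> t \<omega> z) \<le> \<epsilon>" if "t \<in> TTp TT" "real j \<le> t" "y \<in> U" "z \<in> U" for t y z
    proof -
      have "dist (\<phi> t \<omega> y) (\<phi> t \<omega> z) \<le> 1 / (real m + 1)"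
        by (rule dist_phi_le_of_rat_times[OF \<omega> UX Ucl _ that]) (use j in blast)
      with m show ?thesis by linarith
    qed
    then show "\<exists>t0. \<forall>t\<in>TTp TT. t0 \<le> t \<longrightarrow> (\<forall>y\<in>U. \<forall>z\<in>U. dist (\<phi> t \<omega> y) (\<phi> t \<omega> z) \<le> \<epsilon>)"
      by blast
  qed
qed

definition dense_subset :: "'x set" where
  "dense_subset = (SOME D. countable D \<and> D \<subseteq> X \<and> X \<subseteq> closure D)"

lemma dense_subset: "countable dense_subset" "dense_subset \<subseteq> X" "X \<subseteq> closure dense_subset"
proof -
  obtain D where "countable D" "D \<subseteq> X" "X \<subseteq> closure D" by (rule countable_dense_subset)
  then have "\<exists>D. countable D \<and> D \<subseteq> X \<and> X \<subseteq> closure D" by blast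
  from someI_ex[OF this] show "countable dense_subset" "dense_subset \<subseteq> X" "X \<subseteq> closure dense_subset"
    unfolding dense_subset_def by auto
qed

definition rel_ball :: "'x \<Rightarrow> nat \<Rightarrow> 'x set" where
  "rel_ball x k = X \<inter> ball x (1 / (real k + 1))"

lemma openin_rel_ball: "openin (top_of_set X) (rel_ball x k)"
  unfolding rel_ball_def by (rule openin_open_Int) simp

lemma openin_contains_rel_ball:
  assumes U: "openin (top_of_set X) U" and x: "x \<in> U"
  obtains k where "rel_ball x k \<subseteq> U"
proof -
  obtain e where e: "e > 0" "\<And>x'. x' \<in> X \<Longrightarrow> dist x' x < e \<Longrightarrow> x' \<in> U"
    using U x unfolding openin_euclidean_subtopology_iff by blast
  obtain k where "inverse (real (Suc k)) < e" using reals_Archimedean e(1) by blast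
  then have "1 / (real k + 1) < e" by (simp add: inverse_eq_divide add.commute)
  then have "rel_ball x k \<subseteq> U" using e(2) by (auto simp: rel_ball_def dist_commute)
  then show ?thesis by (rule that)
qed

lemma contracts_rel_ball_iff:
  assumes \<omega>: "\<omega> \<in> space P"
  shows "contracts TT \<phi> \<omega> (rel_ball x k) \<longleftrightarrow>
    (\<forall>m::nat. \<exists>j::nat. \<forall>t\<in>rat_times. real j \<le> t \<longrightarrow>
     (\<forall>y\<in>dense_subset. \<forall>z\<in>dense_subset. dist x y < 1 / (real k + 1) \<longrightarrow> dist x z < 1 / (real k + 1) \<longrightarrow>
        dist (\<phi> t \<omega> y) (\<phi> t \<omega> z) \<le> 1 / (real m + 1)))"
proof -
  have cl: "rel_ball x k \<subseteq> closure (rel_ball x k \<inter> dense_subset)"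
    by (rule openin_subset_closure_Int_dense[OF openin_rel_ball dense_subset(2,3)])
  have "y \<in> rel_ball x k \<inter> dense_subset \<longleftrightarrow> y \<in> dense_subset \<and> dist x y < 1 / (real k + 1)" for y
    using dense_subset(2) by (auto simp: rel_ball_def)
  then have key: "(\<forall>y\<in>rel_ball x k \<inter> dense_subset. \<forall>z\<in>rel_ball x k \<inter> dense_subset. Q y z) \<longleftrightarrow>
     (\<forall>y\<in>dense_subset. \<forall>z\<in>dense_subset. dist x y < 1 / (real k + 1) \<longrightarrow> dist x z < 1 / (real k + 1) \<longrightarrow> Q y z)"
    for Q by blast
  have "contracts TT \<phi> \<omega> (rel_ball x k) \<longleftrightarrow>
    (\<forall>m::nat. \<exists>j::nat. \<forall>t\<in>rat_times. real j \<le> t \<longrightarrow>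
       (\<forall>y\<in>rel_ball x k \<inter> dense_subset. \<forall>z\<in>rel_ball x k \<inter> dense_subset.
          dist (\<phi> t \<omega> y) (\<phi> t \<omega> z) \<le> 1 / (real m + 1)))"
    by (rule contracts_iff_rat_times[OF \<omega> _ cl]) (simp add: rel_ball_def)
  then show ?thesis by (simp only: key)
qed

lemma asymp_stable_iff_rel_ball:
  assumes x: "x \<in> X"
  shows "asymp_stable TT X \<phi> \<omega> x \<longleftrightarrow> (\<exists>k. contracts TT \<phi> \<omega> (rel_ball x k))"
proof
  assume "asymp_stable TT X \<phi> \<omega> x"
  then obtain N U where "openin (top_of_set X) U" "x \<in> U" "U \<subseteq> N" "contracts TT \<phi> \<omega> N"
    unfolding asymp_stable_def by blast
  then show "\<exists>k. contracts TT \<phi> \<omega> (rel_ball x k)"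
    by (metis openin_contains_rel_ball contracts_subset order_trans)
next
  assume "\<exists>k. contracts TT \<phi> \<omega> (rel_ball x k)"
  moreover have "x \<in> rel_ball x k" for k using x by (simp add: rel_ball_def)
  ultimately show "asymp_stable TT X \<phi> \<omega> x"
    unfolding asymp_stable_def using openin_rel_ball by (metis rel_ball_def Int_lower1 subset_refl)
qed

lemma rel_ball_dense_center:
  assumes U: "openin (top_of_set X) U" and y: "y \<in> U"
  obtains d k where "d \<in> dense_subset" "y \<in> rel_ball d k" "rel_ball d k \<subseteq> U"
proof -
  have yX: "y \<in> X" using U y openin_imp_subset by blast
  obtain k where k: "rel_ball y k \<subseteq> U" using openin_contains_rel_ball[OF U y] .
  define r where "r = 1 / (2 * (real k + 1))"
  have radii: "1 / (real (2 * k + 1) + 1) = r" "1 / (real k + 1) = 2 * r" by (simp_all add: r_def field_simps)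
  have "r > 0" by (simp add: r_def)
  moreover have "y \<in> closure dense_subset" using yX dense_subset(3) by blast
  ultimately obtain d where d: "d \<in> dense_subset" "dist d y < r" unfolding closure_approachable by blast
  have "rel_ball d (2 * k + 1) \<subseteq> rel_ball y k"
  proof
    fix z assume "z \<in> rel_ball d (2 * k + 1)"
    then have "z \<in> X" "dist d z < r" unfolding rel_ball_def radii by simp_all
    moreover have "dist y z \<le> dist d y + dist d z" by (rule dist_triangle3)
    ultimately show "z \<in> rel_ball y k" using d(2) unfolding rel_ball_def radii by simp
  qed
  moreover have "y \<in> rel_ball d (2 * k + 1)" using yX d(2) unfolding rel_ball_def radii by (simp add: dist_commute)
  ultimately show ?thesis using that d(1) k by blast
qed

definition stable_pairs :: "('w \<times> 'x) set" where
  "stable_pairs = {(\<omega>, x). \<omega> \<in> space P \<and> x \<in> X \<and> asymp_stable TT X \<phi> \<omega> x}"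

text \<open>Asymptotic stability only involves the flow at countably many times and points.\<close>

lemma stable_pairs_sets:
  assumes space: "space M = space P"
    and meas: "\<And>t y. t \<in> rat_times \<Longrightarrow> y \<in> X \<Longrightarrow> (\<lambda>\<omega>. \<phi> t \<omega> y) \<in> borel_measurable M"
  shows "stable_pairs \<in> sets (M \<Otimes>\<^sub>M borelX X)"
proof -
  let ?M = "M \<Otimes>\<^sub>M borelX X"
  have space_M: "space ?M = space P \<times> X"
    by (simp add: space_pair_measure space_restrict_space space)
  have eq: "stable_pairs = {p \<in> space ?M. \<exists>k::nat. \<forall>m::nat. \<exists>j::nat. \<forall>t\<in>rat_times. real j \<le> t \<longrightarrow>
     (\<forall>y\<in>dense_subset. \<forall>z\<in>dense_subset. dist (snd p) y < 1 / (real k + 1) \<longrightarrow>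
        dist (snd p) z < 1 / (real k + 1) \<longrightarrow> dist (\<phi> t (fst p) y) (\<phi> t (fst p) z) \<le> 1 / (real m + 1))}"
    unfolding space_M stable_pairs_def
    by (auto simp: asymp_stable_iff_rel_ball contracts_rel_ball_iff; blast)
  have "(\<lambda>p. snd p) \<in> borel_measurable ?M"
    by (rule measurable_compose[OF measurable_snd measurable_restrict_space1]) simp
  then have near: "{p \<in> space ?M. dist (snd p) y < r} \<in> sets ?M" for y r
    by measurable
  have close: "{p \<in> space ?M. dist (\<phi> t (fst p) y) (\<phi> t (fst p) z) \<le> r} \<in> sets ?M"
    if "t \<in> rat_times" "y \<in> dense_subset" "z \<in> dense_subset" for t y z r
  proof -
    have "(\<lambda>\<omega>. \<phi> t \<omega> y) \<in> borel_measurable M" "(\<lambda>\<omega>. \<phi> t \<omega> z) \<in> borel_measurable M"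
      using that dense_subset(2) meas by auto
    then show ?thesis by measurable
  qed
  show ?thesis
    unfolding eq
    by (intro sets.sets_Collect_countable_Ex sets.sets_Collect_countable_All
        sets.sets_Collect_countable_All'[OF _ countable_rat_times]
        sets.sets_Collect_countable_All'[OF _ dense_subset(1)]
        sets.sets_Collect_imp sets.sets_Collect_const near close)
qed

text \<open>The flow is jointly measurable: replacing the space variable by the first point of a
  dense sequence within distance \<open>1/(k+1)\<close> gives countably-valued, hence measurable,
  approximations, which converge by continuity in space.\<close>

lemma measurable_flow:
  assumes t: "t \<in> TTp TT"
  shows "(\<lambda>p. \<phi> t (fst p) (snd p)) \<in> measurable (P \<Otimes>\<^sub>M borelX X) (borelX X)"
proof (cases "X = {}")
  case True
  then show ?thesis by (simp add: measurable_def space_pair_measure space_restrict_space)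
next
  case False
  let ?M = "P \<Otimes>\<^sub>M borelX X"
  have space_M: "space ?M = space P \<times> X" by (simp add: space_pair_measure space_restrict_space)
  have "dense_subset \<noteq> {}" using False dense_subset(3) by auto
  then obtain d :: "nat \<Rightarrow> 'x" where d: "range d = dense_subset"
    using range_from_nat_into[OF _ dense_subset(1)] by blast
  define idx where "idx k x = (LEAST n. dist x (d n) < 1 / (real k + 1))" for k x
  have "(\<lambda>x. dist x (d n)) \<in> borel_measurable (borelX X)" for n
    by (rule measurable_restrict_space1) (simp add: borel_measurable_continuous_onI continuous_intros)
  then have idx_meas: "idx k \<in> measurable (borelX X) (count_space UNIV)" for k
    unfolding idx_def[abs_def] by measurable
  have dX: "d i \<in> X" for i using d dense_subset(2) by blast
  define g where "g k p = \<phi> t (fst p) (d (idx k (snd p)))" for k p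
  have "g k \<in> borel_measurable ?M" for k
    unfolding g_def
  proof (rule measurable_compose_countable[where f="\<lambda>i p. \<phi> t (fst p) (d i)"])
    show "(\<lambda>p. idx k (snd p)) \<in> measurable ?M (count_space UNIV)"
      by (rule measurable_compose[OF measurable_snd idx_meas])
    show "(\<lambda>p. \<phi> t (fst p) (d i)) \<in> borel_measurable ?M" for i
      using dX by (intro measurable_compose[OF measurable_fst measurable_phi_borel[OF t]])
  qed
  moreover have "(\<lambda>k. g k p) \<longlonglongrightarrow> \<phi> t (fst p) (snd p)" if "p \<in> space ?M" for p
  proof -
    have p: "fst p \<in> space P" "snd p \<in> X" using that unfolding space_M by (auto simp: mem_Times_iff)
    then have "(\<lambda>k. d (idx k (snd p))) \<longlonglongrightarrow> snd p"
      unfolding idx_def using dense_subset(3) d by (intro tendsto_least_close_index) auto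
    then show ?thesis
      unfolding g_def using dX
      by (intro continuous_on_tendsto_compose[OF continuous_on_phi[OF t p(1)]] p always_eventually) auto
  qed
  ultimately have "(\<lambda>p. \<phi> t (fst p) (snd p)) \<in> borel_measurable ?M"
    by (rule borel_measurable_LIMSEQ_metric)
  moreover have "(\<lambda>p. \<phi> t (fst p) (snd p)) \<in> space ?M \<rightarrow> X" using phi_in_X[OF t] space_M by auto
  ultimately show ?thesis by (simp add: measurable_restrict_space2_iff)
qed

definition future0 :: "'w set set" where
  "future0 = future_alg P TT F 0"

definition P_future :: "'w measure" where
  "P_future = sigma (space P) future0"

lemma future0_subset_sets: "future0 \<subseteq> sets P"
  unfolding future0_def future_alg_def using F0_subset_sets by (intro sets.sigma_sets_subset) auto

lemma sets_P_future: "sets P_future = future0"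
proof -
  have "(\<Union>s\<in>TTp TT. F 0 (0 + s)) \<subseteq> Pow (space P)"
    using F0_subset_sets sets.space_closed by fastforce
  moreover have "future0 \<subseteq> Pow (space P)" using future0_subset_sets sets.space_closed by blast
  ultimately show ?thesis
    unfolding P_future_def by (simp add: future0_def future_alg_def sigma_sets_sigma_sets_eq)
qed

lemma space_P_future: "space P_future = space P"
  unfolding P_future_def by (simp add: space_measure_of_conv)

lemma F0_subset_future0: "t \<in> TTp TT \<Longrightarrow> F 0 t \<subseteq> future0"
  unfolding future0_def future_alg_def by (auto intro!: sigma_sets.Basic)

lemma measurable_phi_future:
  assumes "t \<in> TTp TT" "x \<in> X"
  shows "(\<lambda>\<omega>. \<phi> t \<omega> x) \<in> borel_measurable P_future"
proof -
  have "(\<lambda>\<omega>. \<phi> t \<omega> x) \<in> measurable P_future (borelX X)"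
    by (rule measurable_mono[THEN subsetD, OF _ _ _ _ measurable_phi_F[OF assms]])
      (use assms(1) F0_subset_future0 in \<open>auto simp: sets_sigma_F0 space_measure_of_conv space_P_future sets_P_future\<close>)
  then show ?thesis by (simp add: measurable_restrict_space2_iff)
qed

lemma stable_pairs_sets_future: "stable_pairs \<in> sets (P_future \<Otimes>\<^sub>M borelX X)"
  by (rule stable_pairs_sets[OF space_P_future measurable_phi_future[OF rat_times_TTp]])

lemma stable_pairs_sets_P: "stable_pairs \<in> sets (P \<Otimes>\<^sub>M borelX X)"
  by (rule stable_pairs_sets[OF refl measurable_phi_borel[OF rat_times_TTp]])

definition stable_noise :: "'x \<Rightarrow> 'w set" where
  "stable_noise x = {\<omega>\<in>space P. (\<omega>, x) \<in> stable_pairs}"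

definition stab_prob :: "'x \<Rightarrow> ennreal" where
  "stab_prob x = emeasure P (stable_noise x)"

lemma stable_noise_eq_vimage: "stable_noise x = (\<lambda>\<omega>. (\<omega>, x)) -` stable_pairs"
  by (auto simp: stable_noise_def stable_pairs_def)

lemma stable_noise_future0: "stable_noise x \<in> future0"
  using sets_Pair2[OF stable_pairs_sets_future] by (simp add: stable_noise_eq_vimage sets_P_future)

lemma stable_noise_sets: "stable_noise x \<in> sets P"
  using stable_noise_future0 future0_subset_sets by blast

lemma borel_measurable_stab_prob: "stab_prob \<in> borel_measurable (borelX X)"
proof -
  interpret P: sigma_finite_measure P using prob_space_P by (rule prob_space_imp_sigma_finite)
  have "(\<lambda>(x, \<omega>). (\<omega>, x)) \<in> measurable (borelX X \<Otimes>\<^sub>M P) (P \<Otimes>\<^sub>M borelX X)"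
    by (rule measurable_pair_swap')
  then have "(\<lambda>(x, \<omega>). (\<omega>, x)) -` stable_pairs \<inter> space (borelX X \<Otimes>\<^sub>M P) \<in> sets (borelX X \<Otimes>\<^sub>M P)"
    by (rule measurable_sets[OF _ stable_pairs_sets_P])
  moreover have "(\<lambda>(x, \<omega>). (\<omega>, x)) -` stable_pairs \<inter> space (borelX X \<Otimes>\<^sub>M P) =
      {p \<in> space (borelX X \<Otimes>\<^sub>M P). snd p \<in> stable_noise (fst p)}"
    by (auto simp: stable_noise_def space_pair_measure)
  ultimately have "{p \<in> space (borelX X \<Otimes>\<^sub>M P). snd p \<in> stable_noise (fst p)} \<in> sets (borelX X \<Otimes>\<^sub>M P)"
    by simp
  then show ?thesis
    unfolding stab_prob_def[abs_def] by (rule P.measurable_emeasure[rotated]) (auto simp: stable_noise_def)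
qed

lemma measurable_theta_future: "t \<in> TT \<Longrightarrow> \<theta> t \<in> measurable P P_future"
  by (rule measurable_mono[THEN subsetD, OF _ _ order_refl refl measurable_theta])
    (simp_all add: sets_P_future future0_subset_sets space_P_future)

lemma measurable_shift_pair:
  "t \<in> TT \<Longrightarrow> x \<in> X \<Longrightarrow> (\<lambda>\<omega>. (\<theta> t \<omega>, x)) \<in> measurable P (P_future \<Otimes>\<^sub>M borelX X)"
  by (intro measurable_Pair measurable_theta_future measurable_const) (auto simp: space_restrict_space)

lemma theta_vimage_eq_image:
  assumes t: "t \<in> TT" and A: "A \<subseteq> space P"
  shows "\<theta> t -` A \<inter> space P = \<theta> (- t) ` A"
proof
  show "\<theta> t -` A \<inter> space P \<subseteq> \<theta> (- t) ` A"
  proof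
    fix \<omega> assume \<omega>: "\<omega> \<in> \<theta> t -` A \<inter> space P"
    have "\<theta> (- t) (\<theta> t \<omega>) = \<theta> (- t + t) \<omega>" using theta_add[OF TT_uminus[OF t] t] \<omega> by simp
    also have "\<dots> = \<omega>" using theta_0 \<omega> by simp
    finally show "\<omega> \<in> \<theta> (- t) ` A" using \<omega> by (metis IntD1 image_eqI vimageD)
  qed
  show "\<theta> (- t) ` A \<subseteq> \<theta> t -` A \<inter> space P"
  proof
    fix \<omega> assume "\<omega> \<in> \<theta> (- t) ` A"
    then obtain a where a: "a \<in> A" "\<omega> = \<theta> (- t) a" by blast
    have aP: "a \<in> space P" using a A by blast
    have "\<theta> t \<omega> = \<theta> (t + - t) a" using theta_add[OF t TT_uminus[OF t] aP] a by simp
    also have "\<dots> = a" using theta_0 aP by simp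
    finally show "\<omega> \<in> \<theta> t -` A \<inter> space P" using a aP theta_in_space[OF TT_uminus[OF t]] by auto
  qed
qed

lemma emeasure_theta_vimage:
  assumes t: "t \<in> TT" and A: "A \<in> sets P"
  shows "emeasure P (\<theta> t -` A \<inter> space P) = emeasure P A"
  using emeasure_distr[OF measurable_theta[OF t] A] by (simp add: distr_theta[OF t])

lemma theta_vimage_F0:
  assumes t: "t \<in> TTp TT" and s: "s \<in> TTp TT" and A: "A \<in> F 0 s"
  shows "\<theta> t -` A \<inter> space P \<in> future_alg P TT F t"
proof -
  have tT: "t \<in> TT" and sT: "s \<in> TT" "0 \<le> s" using t s by (auto simp: TTp_iff)
  have AP: "A \<subseteq> space P" using A F0_subset_sets[OF s] sets.sets_into_space by blast
  have "\<theta> (- t) ` A \<in> (\<lambda>A. \<theta> (- t) ` A) ` F 0 s" using A by blast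
  also have "\<dots> = F (0 - - t) (s - - t)" by (rule theta_image_F[OF TT_uminus[OF tT] TT_0 sT])
  finally have "\<theta> (- t) ` A \<in> F t (t + s)" by (simp add: add.commute)
  then have "\<theta> (- t) ` A \<in> future_alg P TT F t"
    unfolding future_alg_def using s by (auto intro!: sigma_sets.Basic)
  then show ?thesis using theta_vimage_eq_image[OF tT AP] by simp
qed

lemma theta_vimage_future0:
  assumes t: "t \<in> TTp TT"
  shows "{\<theta> t -` A \<inter> space P | A. A \<in> future0} \<subseteq> future_alg P TT F t"
proof -
  let ?gen = "\<Union>s\<in>TTp TT. F 0 (0 + s)"
  have "\<theta> t \<in> space P \<rightarrow> space P" using theta_in_space t by (auto simp: TTp_iff)
  then have "{\<theta> t -` A \<inter> space P | A. A \<in> future0} = sigma_sets (space P) {\<theta> t -` A \<inter> space P | A. A \<in> ?gen}"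
    unfolding future0_def future_alg_def by (rule sigma_sets_vimage_commute)
  also have "\<dots> \<subseteq> future_alg P TT F t"
    unfolding future_alg_def[of P TT F t]
    by (rule sigma_sets_mono) (use theta_vimage_F0[OF t] in \<open>auto simp: future_alg_def\<close>)
  finally show ?thesis .
qed

lemma contracts_of_shift:
  assumes t: "t \<in> TTp TT" and \<omega>: "\<omega> \<in> space P" and VX: "V \<subseteq> X"
    and VN: "\<phi> t \<omega> ` V \<subseteq> N" and N: "contracts TT \<phi> (\<theta> t \<omega>) N"
  shows "contracts TT \<phi> \<omega> V"
  unfolding contracts_def
proof (intro allI impI)
  fix \<epsilon> :: real assume "\<epsilon> > 0"
  then obtain t0 where t0: "\<And>s y z. s \<in> TTp TT \<Longrightarrow> s \<ge> t0 \<Longrightarrow> y \<in> N \<Longrightarrow> z \<in> N \<Longrightarrow>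
      dist (\<phi> s (\<theta> t \<omega>) y) (\<phi> s (\<theta> t \<omega>) z) \<le> \<epsilon>"
    using N unfolding contracts_def by blast
  have "dist (\<phi> s \<omega> y) (\<phi> s \<omega> z) \<le> \<epsilon>"
    if s: "s \<in> TTp TT" "t + max t0 0 \<le> s" and y: "y \<in> V" and z: "z \<in> V" for s y z
  proof -
    have r: "s - t \<in> TTp TT" using s t TT_diff by (auto simp: TTp_iff)
    have "\<phi> s \<omega> w = \<phi> (s - t) (\<theta> t \<omega>) (\<phi> t \<omega> w)" if "w \<in> X" for w
      using phi_cocycle[OF t r \<omega> that] by simp
    moreover have "t0 \<le> s - t" using s(2) by linarith
    moreover have "\<phi> t \<omega> y \<in> N" "\<phi> t \<omega> z \<in> N" using y z VN by auto
    moreover have "y \<in> X" "z \<in> X" using y z VX by auto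
    ultimately show ?thesis using t0[OF r] by simp
  qed
  then show "\<exists>t0. \<forall>s\<in>TTp TT. t0 \<le> s \<longrightarrow> (\<forall>y\<in>V. \<forall>z\<in>V. dist (\<phi> s \<omega> y) (\<phi> s \<omega> z) \<le> \<epsilon>)"
    by blast
qed

lemma asymp_stable_of_shift:
  assumes t: "t \<in> TTp TT" and \<omega>: "\<omega> \<in> space P" and x: "x \<in> X"
    and st: "asymp_stable TT X \<phi> (\<theta> t \<omega>) (\<phi> t \<omega> x)"
  shows "asymp_stable TT X \<phi> \<omega> x"
proof -
  obtain N U where U: "openin (top_of_set X) U" "\<phi> t \<omega> x \<in> U" "U \<subseteq> N"
    and N: "contracts TT \<phi> (\<theta> t \<omega>) N"
    using st unfolding asymp_stable_def by blast
  define V where "V = X \<inter> \<phi> t \<omega> -` U"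
  have "openin (top_of_set X) V"
    unfolding V_def using phi_in_X[OF t \<omega>]
    by (intro continuous_openin_preimage[OF continuous_on_phi[OF t \<omega>] _ U(1)]) blast
  moreover have "contracts TT \<phi> \<omega> V"
    by (rule contracts_of_shift[OF t \<omega> _ _ N]) (use U(3) in \<open>auto simp: V_def\<close>)
  moreover have "x \<in> V" using x U(2) by (simp add: V_def)
  moreover have "V \<subseteq> X" by (simp add: V_def)
  ultimately show ?thesis unfolding asymp_stable_def by blast
qed

lemma indep_past_flow_shift:
  assumes t: "t \<in> TTp TT" and x: "x \<in> X"
  shows "prob_space.indep_var P (sigma (space P) (F 0 t) \<Otimes>\<^sub>M borelX X) (\<lambda>\<omega>. (\<omega>, \<phi> t \<omega> x))
    (P_future \<Otimes>\<^sub>M borelX X) (\<lambda>\<omega>. (\<theta> t \<omega>, x))"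
proof -
  interpret prob_space P by (rule prob_space_P)
  let ?P0 = "sigma (space P) (F 0 t)"
  have tT: "t \<in> TT" using t by (simp add: TTp_iff)
  have sets_P0: "sets ?P0 = F 0 t" by (rule sets_sigma_F0[OF t])
  have "(\<lambda>\<omega>. \<omega>) \<in> measurable P ?P0"
    by (rule measurable_mono[THEN subsetD, OF _ _ order_refl refl measurable_ident_sets[OF refl]])
      (simp_all add: sets_P0 F0_subset_sets[OF t] space_measure_of_conv)
  then have flow: "(\<lambda>\<omega>. (\<omega>, \<phi> t \<omega> x)) \<in> measurable P (?P0 \<Otimes>\<^sub>M borelX X)"
    by (rule measurable_Pair[OF _ measurable_phi[OF t x]])
  have flow_past: "(\<lambda>\<omega>. (\<omega>, \<phi> t \<omega> x)) \<in> measurable ?P0 (?P0 \<Otimes>\<^sub>M borelX X)"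
    by (rule measurable_Pair[OF measurable_ident_sets[OF refl]]) (rule measurable_phi_F[OF t x])
  have shift: "(\<lambda>\<omega>. (\<theta> t \<omega>, x)) \<in> measurable P (P_future \<Otimes>\<^sub>M borelX X)"
    by (rule measurable_shift_pair[OF tT x])
  have "{(\<lambda>\<omega>. (\<omega>, \<phi> t \<omega> x)) -` A \<inter> space P | A. A \<in> sets (?P0 \<Otimes>\<^sub>M borelX X)} \<subseteq> F 0 t"
    using measurable_sets[OF flow_past] by (auto simp: sets_P0 space_measure_of_conv)
  also have "F 0 t \<subseteq> past_alg P TT F t"
    unfolding past_alg_def using t by (auto intro!: sigma_sets.Basic)
  finally have past: "sigma_sets (space P) {(\<lambda>\<omega>. (\<omega>, \<phi> t \<omega> x)) -` A \<inter> space P | A. A \<in> sets (?P0 \<Otimes>\<^sub>M borelX X)}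
      \<subseteq> past_alg P TT F t"
    unfolding past_alg_def by (rule sigma_sets_mono)
  have "{(\<lambda>\<omega>. (\<theta> t \<omega>, x)) -` A \<inter> space P | A. A \<in> sets (P_future \<Otimes>\<^sub>M borelX X)}
      \<subseteq> {\<theta> t -` A \<inter> space P | A. A \<in> future0}"
  proof (intro subsetI, elim CollectE exE conjE)
    fix B A assume "B = (\<lambda>\<omega>. (\<theta> t \<omega>, x)) -` A \<inter> space P" "A \<in> sets (P_future \<Otimes>\<^sub>M borelX X)"
    then have "B = \<theta> t -` ((\<lambda>a. (a, x)) -` A) \<inter> space P" "(\<lambda>a. (a, x)) -` A \<in> future0"
      using sets_Pair2[of A P_future "borelX X"] by (auto simp: sets_P_future)
    then show "B \<in> {\<theta> t -` A \<inter> space P | A. A \<in> future0}" by blast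
  qed
  also have "\<dots> \<subseteq> future_alg P TT F t" by (rule theta_vimage_future0[OF t])
  finally have future: "sigma_sets (space P) {(\<lambda>\<omega>. (\<theta> t \<omega>, x)) -` A \<inter> space P | A. A \<in> sets (P_future \<Otimes>\<^sub>M borelX X)}
      \<subseteq> future_alg P TT F t"
    unfolding future_alg_def by (rule sigma_sets_mono)
  show ?thesis
    unfolding indep_var_eq using flow shift indep_set_mono[OF indep_past_future[OF tT] past future] by blast
qed

lemma emeasure_shift_stable_slice:
  assumes t: "t \<in> TT" and x: "x \<in> X" and y: "y \<in> X"
  shows "emeasure (distr P (P_future \<Otimes>\<^sub>M borelX X) (\<lambda>\<omega>. (\<theta> t \<omega>, x)))
      {a \<in> space (P_future \<Otimes>\<^sub>M borelX X). (fst a, y) \<in> stable_pairs} = stab_prob y"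
proof -
  let ?S = "P_future \<Otimes>\<^sub>M borelX X"
  have "(\<lambda>\<omega>. (\<theta> t \<omega>, x)) -` {a \<in> space ?S. (fst a, y) \<in> stable_pairs} \<inter> space P
      = \<theta> t -` stable_noise y \<inter> space P"
    using theta_in_space[OF t] x y
    by (auto simp: stable_noise_def space_pair_measure space_P_future space_restrict_space)
  moreover have "y \<in> space (borelX X)" using y by (simp add: space_restrict_space)
  then have "{a \<in> space ?S. (fst a, y) \<in> stable_pairs} \<in> sets ?S"
    using stable_pairs_sets_future by measurable
  ultimately show ?thesis
    by (simp add: emeasure_distr[OF measurable_shift_pair[OF t x]] emeasure_theta_vimage[OF t stable_noise_sets]
        stab_prob_def)
qed

text \<open>By memorylessness the event \<open>G\<close> of the past and the stability of the shifted noise at the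
  point reached at time \<open>t\<close> are independent, and by shift invariance the latter has
  probability \<open>stab_prob\<close>.\<close>

lemma emeasure_past_and_stable_after:
  assumes t: "t \<in> TTp TT" and x: "x \<in> X" and G: "G \<in> F 0 t"
  shows "emeasure P {\<omega>\<in>space P. \<omega> \<in> G \<and> (\<theta> t \<omega>, \<phi> t \<omega> x) \<in> stable_pairs} =
         (\<integral>\<^sup>+ \<omega>. indicator G \<omega> * stab_prob (\<phi> t \<omega> x) \<partial>P)"
proof -
  interpret prob_space P by (rule prob_space_P)
  have tT: "t \<in> TT" using t by (simp add: TTp_iff)
  define T where "T = sigma (space P) (F 0 t) \<Otimes>\<^sub>M borelX X"
  define S where "S = P_future \<Otimes>\<^sub>M borelX X"
  define V where "V = (\<lambda>\<omega>. (\<omega>, \<phi> t \<omega> x))"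
  define W where "W = (\<lambda>\<omega>. (\<theta> t \<omega>, x))"
  have indep: "indep_var T V S W"
    unfolding T_def S_def V_def W_def by (rule indep_past_flow_shift[OF t x])
  have V: "V \<in> measurable P T" and W: "W \<in> measurable P S"
    using indep by (auto dest: indep_var_rv1 indep_var_rv2)
  interpret PW: prob_space "distr P S W" by (rule prob_space_distr[OF W])
  define Q where "Q = {q \<in> space (T \<Otimes>\<^sub>M S). fst (fst q) \<in> G \<and> (fst (snd q), snd (fst q)) \<in> stable_pairs}"
  have Q: "Q \<in> sets (T \<Otimes>\<^sub>M S)"
  proof -
    have "(\<lambda>q. fst (fst q)) \<in> measurable (T \<Otimes>\<^sub>M S) (sigma (space P) (F 0 t))"
      unfolding T_def by measurable
    moreover have "(\<lambda>q. (fst (snd q), snd (fst q))) \<in> measurable (T \<Otimes>\<^sub>M S) (P_future \<Otimes>\<^sub>M borelX X)"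
      unfolding T_def S_def by measurable
    ultimately have "(\<lambda>q. fst (fst q)) -` G \<inter> space (T \<Otimes>\<^sub>M S) \<inter>
        ((\<lambda>q. (fst (snd q), snd (fst q))) -` stable_pairs \<inter> space (T \<Otimes>\<^sub>M S)) \<in> sets (T \<Otimes>\<^sub>M S)"
      using G stable_pairs_sets_future by (intro sets.Int measurable_sets) (auto simp: sets_sigma_F0[OF t])
    then show ?thesis by (rule back_subst) (auto simp: Q_def)
  qed
  have slice: "emeasure (distr P S W) (Pair b -` Q) = indicator G (fst b) * stab_prob (snd b)"
    if b: "b \<in> space T" for b
  proof -
    have "snd b \<in> X" using b by (simp add: T_def space_pair_measure mem_Times_iff space_restrict_space)
    then have "emeasure (distr P S W) {a \<in> space S. (fst a, snd b) \<in> stable_pairs} = stab_prob (snd b)"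
      unfolding S_def W_def by (rule emeasure_shift_stable_slice[OF tT x])
    moreover have "Pair b -` Q = (if fst b \<in> G then {a \<in> space S. (fst a, snd b) \<in> stable_pairs} else {})"
      using b by (auto simp: Q_def space_pair_measure)
    ultimately show ?thesis by (simp add: indicator_def)
  qed
  have "{\<omega>\<in>space P. \<omega> \<in> G \<and> (\<theta> t \<omega>, \<phi> t \<omega> x) \<in> stable_pairs} = (\<lambda>\<omega>. (V \<omega>, W \<omega>)) -` Q \<inter> space P"
    using measurable_space[OF V] measurable_space[OF W] by (auto simp: Q_def V_def W_def space_pair_measure)
  then have "emeasure P {\<omega>\<in>space P. \<omega> \<in> G \<and> (\<theta> t \<omega>, \<phi> t \<omega> x) \<in> stable_pairs}
      = emeasure (distr P (T \<Otimes>\<^sub>M S) (\<lambda>\<omega>. (V \<omega>, W \<omega>))) Q"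
    by (simp add: emeasure_distr[OF measurable_Pair[OF V W] Q])
  also have "\<dots> = emeasure (distr P T V \<Otimes>\<^sub>M distr P S W) Q"
    using indep by (simp add: indep_var_distribution_eq)
  also have "\<dots> = (\<integral>\<^sup>+ b. emeasure (distr P S W) (Pair b -` Q) \<partial>distr P T V)"
    using Q by (intro PW.emeasure_pair_measure_alt) simp
  also have "\<dots> = (\<integral>\<^sup>+ b. indicator G (fst b) * stab_prob (snd b) \<partial>distr P T V)"
    using slice by (intro nn_integral_cong) simp
  also have "\<dots> = (\<integral>\<^sup>+ \<omega>. indicator G \<omega> * stab_prob (\<phi> t \<omega> x) \<partial>P)"
  proof -
    have "(\<lambda>b. indicator G (fst b) :: ennreal) \<in> borel_measurable T"
      unfolding T_def using G by (intro measurable_compose[OF measurable_fst] borel_measurable_indicator)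
        (simp add: sets_sigma_F0[OF t])
    moreover have "(\<lambda>b. stab_prob (snd b)) \<in> borel_measurable T"
      unfolding T_def by (rule measurable_compose[OF measurable_snd borel_measurable_stab_prob])
    ultimately show ?thesis by (subst nn_integral_distr[OF V]) (simp_all add: V_def)
  qed
  finally show ?thesis .
qed

lemma stab_prob_supermartingale:
  assumes t: "t \<in> TTp TT" and x: "x \<in> X" and G: "G \<in> F 0 t"
  shows "(\<integral>\<^sup>+ \<omega>. indicator G \<omega> * stab_prob (\<phi> t \<omega> x) \<partial>P) \<le> emeasure P (stable_noise x \<inter> G)"
proof -
  have "G \<in> sets P" using G F0_subset_sets[OF t] by blast
  moreover have "{\<omega>\<in>space P. \<omega> \<in> G \<and> (\<theta> t \<omega>, \<phi> t \<omega> x) \<in> stable_pairs} \<subseteq> stable_noise x \<inter> G"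
    using asymp_stable_of_shift[OF t _ x] x by (auto simp: stable_noise_def stable_pairs_def)
  ultimately show ?thesis
    unfolding emeasure_past_and_stable_after[OF t x G, symmetric]
    by (intro emeasure_mono) (auto intro: stable_noise_sets)
qed

lemma stab_prob_superharmonic:
  assumes t: "t \<in> TTp TT" and x: "x \<in> X"
  shows "(\<integral>\<^sup>+ \<omega>. stab_prob (\<phi> t \<omega> x) \<partial>P) \<le> stab_prob x"
proof -
  interpret sigma_algebra "space P" "F 0 t" using sigma_algebra_F[of 0 t] TT_0 t by (simp add: TTp_iff)
  have "space P \<in> F 0 t" by (rule top)
  then have "(\<integral>\<^sup>+ \<omega>. indicator (space P) \<omega> * stab_prob (\<phi> t \<omega> x) \<partial>P) \<le> stab_prob x"
    using stab_prob_supermartingale[OF t x, of "space P"] by (simp add: stab_prob_def stable_noise_def Int_absorb2)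
  moreover have "(\<integral>\<^sup>+ \<omega>. indicator (space P) \<omega> * stab_prob (\<phi> t \<omega> x) \<partial>P) = (\<integral>\<^sup>+ \<omega>. stab_prob (\<phi> t \<omega> x) \<partial>P)"
    by (rule nn_integral_cong) simp
  ultimately show ?thesis by simp
qed

definition finite_horizon :: "'w set set" where
  "finite_horizon = (\<Union>n::nat. F 0 (real n))"

lemma F0_mono_nat: "m \<le> n \<Longrightarrow> F 0 (real m) \<subseteq> F 0 (real n)"
  using F_mono[of 0 0 "real m" "real n"] TT_0 TT_of_nat by simp

lemma finite_horizon_algebra: "algebra (space P) finite_horizon"
  unfolding algebra_iff_Un
proof (intro conjI ballI)
  have sa: "sigma_algebra (space P) (F 0 (real n))" for n
    using sigma_algebra_F[of 0 "real n"] TT_0 TT_of_nat by simp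
  show "finite_horizon \<subseteq> Pow (space P)"
    unfolding finite_horizon_def using F0_subset_sets[OF TTp_of_nat] sets.space_closed by blast
  show "{} \<in> finite_horizon"
  proof -
    interpret sigma_algebra "space P" "F 0 (real 0)" by (rule sa)
    show ?thesis unfolding finite_horizon_def using empty_sets by blast
  qed
  fix a assume "a \<in> finite_horizon"
  then obtain n where a: "a \<in> F 0 (real n)" unfolding finite_horizon_def by blast
  interpret sa: sigma_algebra "space P" "F 0 (real n)" by (rule sa)
  show "space P - a \<in> finite_horizon" unfolding finite_horizon_def using a by blast
  fix b assume "b \<in> finite_horizon"
  then obtain m where b: "b \<in> F 0 (real m)" unfolding finite_horizon_def by blast
  interpret sb: sigma_algebra "space P" "F 0 (real (max m n))" by (rule sa)
  have "a \<in> F 0 (real (max m n))" "b \<in> F 0 (real (max m n))"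
    using a b F0_mono_nat[of n "max m n"] F0_mono_nat[of m "max m n"] by auto
  then show "a \<union> b \<in> finite_horizon" unfolding finite_horizon_def by blast
qed

lemma finite_horizon_subset_sets: "finite_horizon \<subseteq> sets P"
  unfolding finite_horizon_def using F0_subset_sets[OF TTp_of_nat] by blast

lemma future0_eq_sigma_finite_horizon: "future0 = sigma_sets (space P) finite_horizon"
proof -
  have "F 0 s \<subseteq> finite_horizon" if s: "s \<in> TTp TT" for s
  proof -
    have "s \<le> real (nat \<lceil>s\<rceil>)" by linarith
    then have "F 0 s \<subseteq> F 0 (real (nat \<lceil>s\<rceil>))"
      using F_mono[of 0 0 s "real (nat \<lceil>s\<rceil>)"] TT_0 TT_of_nat[of "nat \<lceil>s\<rceil>"] s by (simp add: TTp_iff)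
    then show ?thesis unfolding finite_horizon_def by blast
  qed
  then have "(\<Union>s\<in>TTp TT. F 0 (0 + s)) \<subseteq> finite_horizon" by auto
  moreover have "finite_horizon \<subseteq> (\<Union>s\<in>TTp TT. F 0 (0 + s))"
    unfolding finite_horizon_def using TTp_of_nat by auto
  ultimately show ?thesis
    unfolding future0_def future_alg_def by (metis sigma_sets_mono' subset_antisym)
qed

text \<open>The supermartingale inequality gives \<open>P(O\<^sub>x \<inter> B) \<ge> c P(B)\<close> on the finite-horizon
  algebra, and \<open>O\<^sub>x\<close> lies in the \<sigma>-algebra it generates.\<close>

lemma stab_prob_eq_1_of_lower_bound:
  assumes c: "c > 0" and x: "x \<in> X"
    and lower: "\<And>n. AE \<omega> in P. ennreal c \<le> stab_prob (\<phi> (real n) \<omega> x)"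
  shows "stab_prob x = 1"
proof -
  interpret prob_space P by (rule prob_space_P)
  have "c * prob B \<le> prob (stable_noise x \<inter> B)" if B: "B \<in> finite_horizon" for B
  proof -
    obtain n where Bn: "B \<in> F 0 (real n)" using B unfolding finite_horizon_def by blast
    have BP: "B \<in> sets P" using Bn F0_subset_sets[OF TTp_of_nat] by blast
    have "ennreal c * emeasure P B = (\<integral>\<^sup>+ \<omega>. ennreal c * indicator B \<omega> \<partial>P)"
      by (rule nn_integral_cmult_indicator[OF BP, symmetric])
    also have "\<dots> \<le> (\<integral>\<^sup>+ \<omega>. indicator B \<omega> * stab_prob (\<phi> (real n) \<omega> x) \<partial>P)"
      using lower[of n] by (intro nn_integral_mono_AE) (auto elim!: eventually_mono simp: indicator_def)
    also have "\<dots> \<le> emeasure P (stable_noise x \<inter> B)"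
      by (rule stab_prob_supermartingale[OF TTp_of_nat x Bn])
    finally have "ennreal c * ennreal (prob B) \<le> ennreal (prob (stable_noise x \<inter> B))"
      by (simp add: emeasure_eq_measure)
    then show ?thesis using c by (simp add: ennreal_mult''[symmetric] ennreal_le_iff)
  qed
  moreover have "stable_noise x \<in> sigma_sets (space P) finite_horizon"
    using stable_noise_future0 future0_eq_sigma_finite_horizon by simp
  ultimately have "prob (stable_noise x) = 1"
    using c by (intro prob_eq_1_of_algebra_lower_bound[OF finite_horizon_algebra finite_horizon_subset_sets])
  then show ?thesis by (simp add: stab_prob_def emeasure_eq_measure)
qed

end

section \<open>Ergodic stationary measures\<close>

locale ergodic_memoryless_rds = memoryless_rds TT P F \<theta> X \<phi>
  for TT and P :: "'w measure" and F \<theta> and X :: "'x::{metric_space, second_countable_topology} set" and \<phi> +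
  fixes \<rho> :: "'x measure"
  assumes erg: "ergodic_stationary TT P X \<phi> \<rho>"
begin

lemma prob_space_rho: "prob_space \<rho>"
  using erg by (simp add: ergodic_stationary_def stationary_def)

lemma sets_rho: "sets \<rho> = sets (borelX X)"
  using erg by (simp add: ergodic_stationary_def stationary_def)

lemma space_rho: "space \<rho> = X"
  using sets_eq_imp_space_eq[OF sets_rho] by (simp add: space_restrict_space)

lemma emeasure_rho_stationary:
  "t \<in> TTp TT \<Longrightarrow> A \<in> sets (borelX X) \<Longrightarrow> emeasure \<rho> A = (\<integral>\<^sup>+ x. emeasure (transition P X \<phi> t x) A \<partial>\<rho>)"
  using erg by (simp add: ergodic_stationary_def stationary_def)

lemma ergodic_invariant_set:
  "A \<in> sets (borelX X) \<Longrightarrow> (\<forall>t\<in>TTp TT. AE x in \<rho>. emeasure (transition P X \<phi> t x) A = indicator A x) \<Longrightarrow>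
   emeasure \<rho> A = 0 \<or> emeasure \<rho> A = 1"
  using erg by (simp add: ergodic_stationary_def)

lemma pair_sigma_finite_P_rho: "pair_sigma_finite P \<rho>"
  by (simp add: pair_sigma_finite_def prob_space_imp_sigma_finite prob_space_P prob_space_rho)

lemma sets_P_rho: "sets (P \<Otimes>\<^sub>M \<rho>) = sets (P \<Otimes>\<^sub>M borelX X)"
  by (rule sets_pair_measure_cong[OF refl sets_rho])

lemma space_P_rho: "space (P \<Otimes>\<^sub>M \<rho>) = space P \<times> X"
  by (simp add: space_pair_measure space_rho)

lemma stable_pairs_sets_rho: "stable_pairs \<in> sets (P \<Otimes>\<^sub>M \<rho>)"
  using stable_pairs_sets_P sets_P_rho by simp

lemma emeasure_transition:
  assumes t: "t \<in> TTp TT" and x: "x \<in> X" and A: "A \<in> sets (borelX X)"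
  shows "emeasure (transition P X \<phi> t x) A = emeasure P {\<omega>\<in>space P. \<phi> t \<omega> x \<in> A}"
  unfolding transition_def
  by (subst emeasure_distr[OF measurable_phi[OF t x] A]) (auto intro: arg_cong[where f="emeasure P"])

lemma distr_flow_stationary:
  assumes t: "t \<in> TTp TT"
  shows "distr (P \<Otimes>\<^sub>M \<rho>) (borelX X) (\<lambda>p. \<phi> t (fst p) (snd p)) = \<rho>"
proof (rule measure_eqI)
  have flow: "(\<lambda>p. \<phi> t (fst p) (snd p)) \<in> measurable (P \<Otimes>\<^sub>M \<rho>) (borelX X)"
    using measurable_flow[OF t] by (simp add: measurable_cong_sets[OF sets_P_rho refl])
  show "sets (distr (P \<Otimes>\<^sub>M \<rho>) (borelX X) (\<lambda>p. \<phi> t (fst p) (snd p))) = sets \<rho>" by (simp add: sets_rho)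
  fix A assume "A \<in> sets (distr (P \<Otimes>\<^sub>M \<rho>) (borelX X) (\<lambda>p. \<phi> t (fst p) (snd p)))"
  then have A: "A \<in> sets (borelX X)" by simp
  let ?B = "(\<lambda>p. \<phi> t (fst p) (snd p)) -` A \<inter> space (P \<Otimes>\<^sub>M \<rho>)"
  have "emeasure (distr (P \<Otimes>\<^sub>M \<rho>) (borelX X) (\<lambda>p. \<phi> t (fst p) (snd p))) A = emeasure (P \<Otimes>\<^sub>M \<rho>) ?B"
    by (rule emeasure_distr[OF flow A])
  also have "\<dots> = (\<integral>\<^sup>+ y. emeasure P ((\<lambda>x. (x, y)) -` ?B) \<partial>\<rho>)"
    by (rule pair_sigma_finite.emeasure_pair_measure_alt2[OF pair_sigma_finite_P_rho measurable_sets[OF flow A]])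
  also have "\<dots> = (\<integral>\<^sup>+ y. emeasure (transition P X \<phi> t y) A \<partial>\<rho>)"
  proof (rule nn_integral_cong)
    fix y assume "y \<in> space \<rho>"
    then have y: "y \<in> X" by (simp add: space_rho)
    then have "(\<lambda>x. (x, y)) -` ?B = {\<omega>\<in>space P. \<phi> t \<omega> y \<in> A}" by (auto simp: space_P_rho)
    then show "emeasure P ((\<lambda>x. (x, y)) -` ?B) = emeasure (transition P X \<phi> t y) A"
      by (simp add: emeasure_transition[OF t y A])
  qed
  also have "\<dots> = emeasure \<rho> A" by (rule emeasure_rho_stationary[OF t A, symmetric])
  finally show "emeasure (distr (P \<Otimes>\<^sub>M \<rho>) (borelX X) (\<lambda>p. \<phi> t (fst p) (snd p))) A = emeasure \<rho> A" .
qed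

lemma nn_integral_flow_stationary:
  assumes t: "t \<in> TTp TT" and g: "g \<in> borel_measurable (borelX X)"
  shows "(\<integral>\<^sup>+ x. (\<integral>\<^sup>+ \<omega>. g (\<phi> t \<omega> x) \<partial>P) \<partial>\<rho>) = (\<integral>\<^sup>+ x. g x \<partial>\<rho>)"
proof -
  have flow: "(\<lambda>p. \<phi> t (fst p) (snd p)) \<in> measurable (P \<Otimes>\<^sub>M \<rho>) (borelX X)"
    using measurable_flow[OF t] by (simp add: measurable_cong_sets[OF sets_P_rho refl])
  have "(\<integral>\<^sup>+ x. (\<integral>\<^sup>+ \<omega>. g (\<phi> t \<omega> x) \<partial>P) \<partial>\<rho>) = (\<integral>\<^sup>+ p. g (\<phi> t (fst p) (snd p)) \<partial>(P \<Otimes>\<^sub>M \<rho>))"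
    using pair_sigma_finite.nn_integral_snd[OF pair_sigma_finite_P_rho measurable_compose[OF flow g]] by simp
  also have "\<dots> = (\<integral>\<^sup>+ y. g y \<partial>(distr (P \<Otimes>\<^sub>M \<rho>) (borelX X) (\<lambda>p. \<phi> t (fst p) (snd p))))"
    by (rule nn_integral_distr[symmetric, OF flow]) (simp add: g)
  also have "\<dots> = (\<integral>\<^sup>+ x. g x \<partial>\<rho>)" by (simp add: distr_flow_stationary[OF t])
  finally show ?thesis .
qed

lemma borel_measurable_transition_integral:
  assumes t: "t \<in> TTp TT" and g: "g \<in> borel_measurable (borelX X)"
  shows "(\<lambda>x. \<integral>\<^sup>+ \<omega>. g (\<phi> t \<omega> x) \<partial>P) \<in> borel_measurable \<rho>"
proof -
  interpret sigma_finite_measure P using prob_space_P by (rule prob_space_imp_sigma_finite)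
  have "(\<lambda>p. g (\<phi> t (fst p) (snd p))) \<in> borel_measurable (P \<Otimes>\<^sub>M \<rho>)"
    using measurable_compose[OF measurable_flow[OF t] g] by (simp add: measurable_cong_sets[OF sets_P_rho refl])
  from measurable_compose[OF measurable_pair_swap' this]
  have "(\<lambda>(x, \<omega>). g (\<phi> t \<omega> x)) \<in> borel_measurable (\<rho> \<Otimes>\<^sub>M P)"
    by (simp add: comp_def case_prod_beta')
  then show ?thesis by (rule borel_measurable_nn_integral)
qed

lemma emeasure_stable_pairs: "emeasure (P \<Otimes>\<^sub>M \<rho>) stable_pairs = (\<integral>\<^sup>+ x. stab_prob x \<partial>\<rho>)"
  using pair_sigma_finite.emeasure_pair_measure_alt2[OF pair_sigma_finite_P_rho stable_pairs_sets_rho]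
  by (simp add: stab_prob_def stable_noise_eq_vimage)

lemma borel_measurable_stab_prob_rho: "stab_prob \<in> borel_measurable \<rho>"
  using borel_measurable_stab_prob by (simp add: measurable_cong_sets[OF sets_rho refl])

lemma transition_eq_indicator_of_stays:
  assumes t: "t \<in> TTp TT" and A: "A \<in> sets (borelX X)"
    and stays: "AE x in \<rho>. x \<in> A \<longrightarrow> emeasure (transition P X \<phi> t x) A = 1"
  shows "AE x in \<rho>. emeasure (transition P X \<phi> t x) A = indicator A x"
proof -
  interpret \<rho>: prob_space \<rho> by (rule prob_space_rho)
  define u where "u x = (\<integral>\<^sup>+ \<omega>. indicator A (\<phi> t \<omega> x) \<partial>P)" for x
  have indA: "indicator A \<in> borel_measurable (borelX X)" using A by simp
  have u_transition: "u x = emeasure (transition P X \<phi> t x) A" if x: "x \<in> X" for x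
  proof -
    have "(\<lambda>\<omega>. \<phi> t \<omega> x) -` A \<inter> space P \<in> sets P" by (rule measurable_sets[OF measurable_phi[OF t x] A])
    moreover have "(\<lambda>\<omega>. \<phi> t \<omega> x) -` A \<inter> space P = {\<omega>\<in>space P. \<phi> t \<omega> x \<in> A}" by blast
    moreover have "u x = (\<integral>\<^sup>+ \<omega>. indicator {\<omega>\<in>space P. \<phi> t \<omega> x \<in> A} \<omega> \<partial>P)"
      unfolding u_def by (rule nn_integral_cong) (simp add: indicator_def)
    ultimately show ?thesis by (simp add: emeasure_transition[OF t x A])
  qed
  have "AE x in \<rho>. u x = indicator A x"
  proof (rule AE_eq_of_le_nn_integral_eq)
    show "u \<in> borel_measurable \<rho>"
      unfolding u_def[abs_def] by (rule borel_measurable_transition_integral[OF t indA])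
    show "indicator A \<in> borel_measurable \<rho>" using A sets_rho by simp
    show "AE x in \<rho>. indicator A x \<le> u x"
      using stays by (rule AE_mp) (auto intro!: AE_I2 simp: space_rho u_transition indicator_def)
    show "(\<integral>\<^sup>+ x. u x \<partial>\<rho>) = (\<integral>\<^sup>+ x. indicator A x \<partial>\<rho>)"
      unfolding u_def by (rule nn_integral_flow_stationary[OF t indA])
    then show "(\<integral>\<^sup>+ x. u x \<partial>\<rho>) \<noteq> \<infinity>" using A sets_rho by (simp add: \<rho>.emeasure_finite)
  qed
  then show ?thesis by (rule AE_mp) (auto intro!: AE_I2 simp: space_rho u_transition)
qed

definition stab_level :: "real \<Rightarrow> 'x set" where
  "stab_level c = {y\<in>X. ennreal c \<le> stab_prob y}"

lemma stab_level_sets: "stab_level c \<in> sets (borelX X)"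
proof -
  have [measurable]: "stab_prob \<in> borel_measurable (borelX X)" by (rule borel_measurable_stab_prob)
  have "{y\<in>space (borelX X). ennreal c \<le> stab_prob y} \<in> sets (borelX X)" by measurable
  then show ?thesis by (simp add: stab_level_def space_restrict_space)
qed

text \<open>Stationarity turns the superharmonic inequality for the bounded function
  \<open>min stab_prob c\<close> into an almost sure equality.\<close>

lemma AE_stab_prob_trunc_harmonic:
  fixes c :: real
  assumes t: "t \<in> TTp TT"
  shows "AE x in \<rho>. min (stab_prob x) c = (\<integral>\<^sup>+ \<omega>. min (stab_prob (\<phi> t \<omega> x)) c \<partial>P)"
proof -
  interpret P: prob_space P by (rule prob_space_P)
  interpret \<rho>: prob_space \<rho> by (rule prob_space_rho)
  have h: "(\<lambda>y. min (stab_prob y) c) \<in> borel_measurable (borelX X)"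
    using borel_measurable_stab_prob by measurable
  show ?thesis
  proof (rule AE_eq_of_le_nn_integral_eq)
    show "(\<lambda>y. min (stab_prob y) c) \<in> borel_measurable \<rho>"
      using h by (simp add: measurable_cong_sets[OF sets_rho refl])
    show "(\<lambda>x. \<integral>\<^sup>+ \<omega>. min (stab_prob (\<phi> t \<omega> x)) c \<partial>P) \<in> borel_measurable \<rho>"
      by (rule borel_measurable_transition_integral[OF t h])
    have "(\<integral>\<^sup>+ \<omega>. min (stab_prob (\<phi> t \<omega> x)) c \<partial>P) \<le> min (stab_prob x) c" if x: "x \<in> X" for x
    proof -
      have "(\<integral>\<^sup>+ \<omega>. min (stab_prob (\<phi> t \<omega> x)) c \<partial>P) \<le> (\<integral>\<^sup>+ \<omega>. stab_prob (\<phi> t \<omega> x) \<partial>P)"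
        by (intro nn_integral_mono) simp
      also have "\<dots> \<le> stab_prob x" by (rule stab_prob_superharmonic[OF t x])
      finally show ?thesis
        using nn_integral_mono[of P "\<lambda>\<omega>. min (stab_prob (\<phi> t \<omega> x)) c" "\<lambda>_. c"]
        by (simp add: P.emeasure_space_1)
    qed
    then show "AE x in \<rho>. (\<integral>\<^sup>+ \<omega>. min (stab_prob (\<phi> t \<omega> x)) c \<partial>P) \<le> min (stab_prob x) c"
      by (intro AE_I2) (simp add: space_rho)
    show "(\<integral>\<^sup>+ x. min (stab_prob x) c \<partial>\<rho>) = (\<integral>\<^sup>+ x. (\<integral>\<^sup>+ \<omega>. min (stab_prob (\<phi> t \<omega> x)) c \<partial>P) \<partial>\<rho>)"
      by (rule nn_integral_flow_stationary[OF t h, symmetric])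
    have "(\<integral>\<^sup>+ x. min (stab_prob x) c \<partial>\<rho>) \<le> (\<integral>\<^sup>+ x. c \<partial>\<rho>)" by (intro nn_integral_mono) simp
    then show "(\<integral>\<^sup>+ x. min (stab_prob x) c \<partial>\<rho>) \<noteq> \<infinity>"
      using neq_top_trans[OF ennreal_neq_top] by (simp add: \<rho>.emeasure_space_1)
  qed
qed

lemma stab_level_stays:
  assumes t: "t \<in> TTp TT" and x: "x \<in> stab_level c"
    and harmonic: "min (stab_prob x) c = (\<integral>\<^sup>+ \<omega>. min (stab_prob (\<phi> t \<omega> x)) c \<partial>P)"
  shows "emeasure (transition P X \<phi> t x) (stab_level c) = 1"
proof -
  interpret P: prob_space P by (rule prob_space_P)
  have xX: "x \<in> X" using x by (simp add: stab_level_def)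
  have "AE \<omega> in P. ennreal c = min (stab_prob (\<phi> t \<omega> x)) c"
  proof (rule AE_eq_of_le_nn_integral_eq)
    show "(\<lambda>\<omega>. min (stab_prob (\<phi> t \<omega> x)) (ennreal c)) \<in> borel_measurable P"
      using measurable_compose[OF measurable_phi[OF t xX] borel_measurable_stab_prob] by measurable
    show "(\<integral>\<^sup>+ \<omega>. ennreal c \<partial>P) = (\<integral>\<^sup>+ \<omega>. min (stab_prob (\<phi> t \<omega> x)) c \<partial>P)"
      using x harmonic by (simp add: stab_level_def min_absorb2 P.emeasure_space_1)
  qed (simp_all add: P.emeasure_space_1)
  then have "AE \<omega> in P. \<phi> t \<omega> x \<in> stab_level c"
    by (rule AE_mp) (auto intro!: AE_I2 simp: stab_level_def min_def phi_in_X[OF t _ xX] split: if_splits)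
  then have "emeasure P {\<omega>\<in>space P. \<phi> t \<omega> x \<in> stab_level c} = 1"
    using measurable_sets[OF measurable_phi[OF t xX] stab_level_sets]
    by (intro P.emeasure_eq_1_AE) (auto simp: Int_def conj_commute)
  then show ?thesis by (simp add: emeasure_transition[OF t xX stab_level_sets])
qed

lemma stab_level_invariant:
  assumes t: "t \<in> TTp TT"
  shows "AE x in \<rho>. emeasure (transition P X \<phi> t x) (stab_level c) = indicator (stab_level c) x"
proof (rule transition_eq_indicator_of_stays[OF t stab_level_sets])
  show "AE x in \<rho>. x \<in> stab_level c \<longrightarrow> emeasure (transition P X \<phi> t x) (stab_level c) = 1"
    using AE_stab_prob_trunc_harmonic[OF t, of c]
  proof eventually_elim
    case (elim x)
    then show ?case using stab_level_stays[OF t] by blast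
  qed
qed

lemma stab_level_zero_one: "emeasure \<rho> (stab_level c) = 0 \<or> emeasure \<rho> (stab_level c) = 1"
  using stab_level_invariant by (intro ergodic_invariant_set[OF stab_level_sets]) blast

lemma AE_stab_level_of_pos:
  assumes pos: "emeasure (P \<Otimes>\<^sub>M \<rho>) stable_pairs > 0"
  obtains c where "c > 0" "AE x in \<rho>. x \<in> stab_level c"
proof (rule ccontr)
  interpret \<rho>: prob_space \<rho> by (rule prob_space_rho)
  assume "\<not> thesis"
  with that have none: "\<not> (AE x in \<rho>. x \<in> stab_level c)" if "c > 0" for c
    using that by blast
  have "emeasure \<rho> (stab_level (1 / (real n + 1))) = 0" for n
  proof -
    have "emeasure \<rho> (stab_level (1 / (real n + 1))) \<noteq> 1"
    proof
      assume "emeasure \<rho> (stab_level (1 / (real n + 1))) = 1"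
      then have "AE x in \<rho>. x \<in> stab_level (1 / (real n + 1))"
        using stab_level_sets sets_rho by (intro \<rho>.AE_prob_1) (simp add: \<rho>.emeasure_eq_measure)
      then show False using none[of "1 / (real n + 1)"] by simp
    qed
    then show ?thesis using stab_level_zero_one by blast
  qed
  then have "AE x in \<rho>. \<forall>n. x \<notin> stab_level (1 / (real n + 1))"
    unfolding AE_all_countable using stab_level_sets sets_rho by (intro allI AE_not_in) auto
  then have "AE x in \<rho>. stab_prob x = 0"
  proof (rule AE_mp, intro AE_I2 impI)
    fix x assume "x \<in> space \<rho>" and small: "\<forall>n. x \<notin> stab_level (1 / (real n + 1))"
    then have "stab_prob x < ennreal (1 / (real n + 1))" for n
      by (auto simp: stab_level_def space_rho not_le)
    then show "stab_prob x = 0" by (rule ennreal_eq_0_if_less_inverse)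
  qed
  then have "(\<integral>\<^sup>+ x. stab_prob x \<partial>\<rho>) = 0"
    by (simp add: nn_integral_0_iff_AE[OF borel_measurable_stab_prob_rho])
  then show False using pos by (simp add: emeasure_stable_pairs)
qed

lemma stable_pairs_full_of_pos:
  assumes pos: "emeasure (P \<Otimes>\<^sub>M \<rho>) stable_pairs > 0"
  shows "emeasure (P \<Otimes>\<^sub>M \<rho>) stable_pairs = 1"
proof -
  interpret P: prob_space P by (rule prob_space_P)
  interpret \<rho>: prob_space \<rho> by (rule prob_space_rho)
  obtain c where c: "c > 0" and level: "AE x in \<rho>. x \<in> stab_level c"
    using AE_stab_level_of_pos[OF pos] by blast
  have "AE x in \<rho>. \<forall>n::nat. emeasure (transition P X \<phi> (real n) x) (stab_level c) = indicator (stab_level c) x"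
    unfolding AE_all_countable using stab_level_invariant[OF TTp_of_nat] by blast
  with level have "AE x in \<rho>. stab_prob x = 1"
  proof eventually_elim
    case (elim x)
    then have x: "x \<in> X" by (simp add: stab_level_def)
    have "AE \<omega> in P. ennreal c \<le> stab_prob (\<phi> (real n) \<omega> x)" for n
    proof -
      let ?A = "{\<omega>\<in>space P. \<phi> (real n) \<omega> x \<in> stab_level c}"
      have "?A \<in> sets P"
        using measurable_sets[OF measurable_phi[OF TTp_of_nat x] stab_level_sets] by (simp add: Int_def conj_commute)
      moreover have "emeasure P ?A = 1"
        using elim emeasure_transition[OF TTp_of_nat x stab_level_sets] by simp
      ultimately have "AE \<omega> in P. \<omega> \<in> ?A" by (intro P.AE_prob_1) (simp add: P.emeasure_eq_measure)
      then show ?thesis by (rule AE_mp) (auto intro!: AE_I2 simp: stab_level_def)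
    qed
    then show "stab_prob x = 1" by (rule stab_prob_eq_1_of_lower_bound[OF c x])
  qed
  then have "(\<integral>\<^sup>+ x. stab_prob x \<partial>\<rho>) = (\<integral>\<^sup>+ x. 1 \<partial>\<rho>)" by (rule nn_integral_cong_AE)
  then show ?thesis by (simp add: emeasure_stable_pairs \<rho>.emeasure_space_1)
qed

lemma openin_sets_rho:
  assumes "openin (top_of_set X) U"
  shows "U \<in> sets \<rho>"
proof -
  obtain V where "open V" "U = X \<inter> V" using assms by (auto simp: openin_open)
  then show ?thesis unfolding sets_rho sets_restrict_space by auto
qed

text \<open>The complement of the support is covered by countably many null balls centred in
  the dense subset.\<close>

lemma AE_in_supp: "AE x in \<rho>. x \<in> supp X \<rho>"
proof -
  define N where "N = (\<Union>d\<in>dense_subset. \<Union>k. if emeasure \<rho> (rel_ball d k) = 0 then rel_ball d k else {})"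
  have "N \<in> null_sets \<rho>"
    unfolding N_def using openin_sets_rho[OF openin_rel_ball]
    by (intro null_sets_UN' dense_subset(1) null_sets_UN) auto
  moreover have "{x\<in>space \<rho>. x \<notin> supp X \<rho>} \<subseteq> N"
  proof
    fix x assume "x \<in> {x\<in>space \<rho>. x \<notin> supp X \<rho>}"
    then obtain U where U: "openin (top_of_set X) U" "x \<in> U" "emeasure \<rho> U = 0"
      unfolding supp_def space_rho by auto
    obtain d k where dk: "d \<in> dense_subset" "x \<in> rel_ball d k" "rel_ball d k \<subseteq> U"
      by (rule rel_ball_dense_center[OF U(1,2)])
    have "emeasure \<rho> (rel_ball d k) \<le> emeasure \<rho> U"
      by (rule emeasure_mono[OF dk(3) openin_sets_rho[OF U(1)]])
    then show "x \<in> N" unfolding N_def using dk U(3) by auto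
  qed
  ultimately show ?thesis by (rule AE_I')
qed

definition contracting_noise :: "'w set" where
  "contracting_noise =
     {\<omega> \<in> space P. \<exists>U. openin (top_of_set X) U \<and> U \<inter> supp X \<rho> \<noteq> {} \<and> contracts TT \<phi> \<omega> U}"

lemma emeasure_stable_slice_pos:
  assumes "\<omega> \<in> contracting_noise"
  shows "emeasure \<rho> (Pair \<omega> -` stable_pairs) \<noteq> 0"
proof -
  obtain U y where \<omega>: "\<omega> \<in> space P" and U: "openin (top_of_set X) U" "y \<in> U" "y \<in> supp X \<rho>"
    and c: "contracts TT \<phi> \<omega> U"
    using assms unfolding contracting_noise_def by blast
  have UX: "U \<subseteq> X" using U(1) openin_imp_subset by blast
  have "U \<subseteq> Pair \<omega> -` stable_pairs"
  proof
    fix x assume x: "x \<in> U"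
    have "asymp_stable TT X \<phi> \<omega> x" unfolding asymp_stable_def using UX U(1) c x by blast
    then show "x \<in> Pair \<omega> -` stable_pairs" using \<omega> x UX by (auto simp: stable_pairs_def)
  qed
  then have "emeasure \<rho> U \<le> emeasure \<rho> (Pair \<omega> -` stable_pairs)"
    by (rule emeasure_mono[OF _ sets_Pair1[OF stable_pairs_sets_rho]])
  moreover have "emeasure \<rho> U > 0" using U unfolding supp_def by blast
  ultimately show ?thesis by simp
qed

lemma contracting_noise_of_stable_slice_pos:
  assumes \<omega>: "\<omega> \<in> space P" and pos: "emeasure \<rho> (Pair \<omega> -` stable_pairs) \<noteq> 0"
  shows "\<omega> \<in> contracting_noise"
proof -
  let ?S = "Pair \<omega> -` stable_pairs"
  have S: "?S \<in> sets \<rho>" by (rule sets_Pair1[OF stable_pairs_sets_rho])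
  have "?S \<inter> supp X \<rho> \<noteq> {}"
  proof
    assume disj: "?S \<inter> supp X \<rho> = {}"
    have "AE x in \<rho>. x \<notin> ?S"
      using AE_in_supp by (rule AE_mp) (use disj in \<open>auto intro!: AE_I2\<close>)
    moreover have "{x\<in>space \<rho>. \<not> x \<notin> ?S} = ?S" using sets.sets_into_space[OF S] by blast
    ultimately have "emeasure \<rho> ?S = 0" by (rule AE_iff_measurable[OF S, THEN iffD1, rotated])
    with pos show False by contradiction
  qed
  then obtain x where "(\<omega>, x) \<in> stable_pairs" and x: "x \<in> supp X \<rho>" by blast
  then obtain N U where U: "openin (top_of_set X) U" "x \<in> U" "U \<subseteq> N" "contracts TT \<phi> \<omega> N"
    unfolding stable_pairs_def asymp_stable_def by blast
  have "contracts TT \<phi> \<omega> U" using contracts_subset[OF U(4,3)] .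
  then show ?thesis
    unfolding contracting_noise_def using \<omega> U(1,2) x by blast
qed

lemma contracting_noise_eq: "contracting_noise = {\<omega>\<in>space P. emeasure \<rho> (Pair \<omega> -` stable_pairs) \<noteq> 0}"
  using emeasure_stable_slice_pos contracting_noise_of_stable_slice_pos
  by (auto simp: contracting_noise_def)

lemma emeasure_stable_pairs_pos_iff:
  "emeasure (P \<Otimes>\<^sub>M \<rho>) stable_pairs > 0 \<longleftrightarrow> emeasure P contracting_noise > 0"
proof -
  interpret \<rho>: sigma_finite_measure \<rho> using prob_space_rho by (rule prob_space_imp_sigma_finite)
  have "(\<lambda>\<omega>. emeasure \<rho> (Pair \<omega> -` stable_pairs)) \<in> borel_measurable P"
    by (rule \<rho>.measurable_emeasure_Pair[OF stable_pairs_sets_rho])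
  then show ?thesis
    unfolding \<rho>.emeasure_pair_measure_alt[OF stable_pairs_sets_rho] contracting_noise_eq
    by (simp add: nn_integral_0_iff zero_less_iff_neq_zero)
qed

end

theorem lemma2p1:
  fixes TT :: "real set" and P :: "'w measure" and F :: "real \<Rightarrow> real \<Rightarrow> 'w set set"
    and \<theta> :: "real \<Rightarrow> 'w \<Rightarrow> 'w" and X :: "'x::polish_space set"
    and \<phi> :: "real \<Rightarrow> 'w \<Rightarrow> 'x \<Rightarrow> 'x" and \<rho> :: "'x measure"
  assumes noise: "memoryless_noise TT P F \<theta>"
    and X_borel: "X \<in> sets borel"
    and rds: "RDS TT P F \<theta> X \<phi>"
    and erg: "ergodic_stationary TT P X \<phi> \<rho>"
  defines "Ost \<equiv> {(\<omega>, x). \<omega> \<in> space P \<and> x \<in> X \<and> asymp_stable TT X \<phi> \<omega> x}"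
  shows "(emeasure (P \<Otimes>\<^sub>M \<rho>) Ost = 1 \<longleftrightarrow> emeasure (P \<Otimes>\<^sub>M \<rho>) Ost > 0) \<and>
         (emeasure (P \<Otimes>\<^sub>M \<rho>) Ost > 0 \<longleftrightarrow>
          emeasure P {\<omega> \<in> space P. \<exists>U. openin (top_of_set X) U \<and> U \<inter> supp X \<rho> \<noteq> {}
                                        \<and> contracts TT \<phi> \<omega> U} > 0)"
proof -
  interpret ergodic_memoryless_rds TT P F \<theta> X \<phi> \<rho>
    using noise rds erg by unfold_locales
  have "Ost = stable_pairs" unfolding Ost_def stable_pairs_def ..
  moreover have "{\<omega> \<in> space P. \<exists>U. openin (top_of_set X) U \<and> U \<inter> supp X \<rho> \<noteq> {} \<and> contracts TT \<phi> \<omega> U}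
      = contracting_noise"
    unfolding contracting_noise_def ..
  ultimately show ?thesis
    using stable_pairs_full_of_pos emeasure_stable_pairs_pos_iff by (metis zero_less_one)
qed

end
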